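(* Define $$p^{\rm Ab}_{\rm c}:=\sup\{p\in[0,1]:\lim_{n\to\infty}P^{\rm Ab}_n(p)=0\},\qquad p^{\rm aB}_{\rm c}:=\inf\{p\in[0,1]:\lim_{n\to\infty}P^{\rm aB}_n(p)=1\}.$$ Then $$\tfrac12\leq p^{\rm Ab}_{\rm c}\leq \tfrac78\qquad\text{and}\qquad \tfrac1{16}\leq p^{\rm aB}_{\rm c}\leq \tfrac12(3-\sqrt5).$$
   Context: Fix $n\geq1$. Two players, Alice and Bob, alternately make moves, Alice first, each making $n$ moves; every move is a choice from $\{1,2\}$. Write Alice's moves as $a=(a_1,\dots,a_n)$ and Bob's as $b=(b_1,\dots,b_n)$, and let $|a|_1:=\#\{k:a_k=1\}$, $|b|_1:=\#\{k:b_k=1\}$. In the game ${\rm Ab}_n(p)$ the outcome is $(a,|b|_1)$; in the game ${\rm aB}_n(p)$ the outcome is $(|a|_1,b)$. To each possible outcome a winner is assigned independently at random: Bob with probability $p$, Alice with probability $1-p$. The players know this assignment and all previous moves. $P^{\rm Ab}_n(p)$ and $P^{\rm aB}_n(p)$ denote the probabilities that Bob has a winning strategy (a rule choosing his moves as a function of previous moves that guarantees a win whatever Alice plays) in ${\rm Ab}_n(p)$ and ${\rm aB}_n(p)$. These are exactly the critical values whose existence is asserted in the sharp threshold theorem: $P^{\rm Ab}_n(p)\to0$ iff $p<p^{\rm Ab}_{\rm c}$ and $\to1$ for $p>p^{\rm Ab}_{\rm c}$; $P^{\rm aB}_n(p)\to0$ for $p<p^{\rm aB}_{\rm c}$ and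 $\to1$ iff $p>p^{\rm aB}_{\rm c}$. *)

theory Defs
  imports Complex_Main
begin

text \<open>A strategy for Bob maps the full history of
previous moves (a_1, b_1, ..., a_k) to his next move b_k.\<close>

fun bob_play :: "(nat list \<Rightarrow> nat) \<Rightarrow> nat list \<Rightarrow> nat list \<Rightarrow> nat list" where
  "bob_play \<sigma> hist [] = []"
| "bob_play \<sigma> hist (x # xs) =
     (let y = \<sigma> (hist @ [x]) in y # bob_play \<sigma> (hist @ [x, y]) xs)"

definition bob_moves :: "(nat list \<Rightarrow> nat) \<Rightarrow> nat list \<Rightarrow> nat list" where
  "bob_moves \<sigma> a = bob_play \<sigma> [] a"

definition move_seqs :: "nat \<Rightarrow> nat list set" where
  "move_seqs n = {a. length a = n \<and> set a \<subseteq> {1, 2}}"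

definition valid_strategy :: "(nat list \<Rightarrow> nat) \<Rightarrow> bool" where
  "valid_strategy \<sigma> \<longleftrightarrow> (\<forall>h. \<sigma> h \<in> {1, 2})"

definition outcomes_Ab :: "nat \<Rightarrow> (nat list \<times> nat) set" where
  "outcomes_Ab n = {(a, k). a \<in> move_seqs n \<and> k \<le> n}"

definition outcomes_aB :: "nat \<Rightarrow> (nat \<times> nat list) set" where
  "outcomes_aB n = {(k, b). k \<le> n \<and> b \<in> move_seqs n}"

definition bob_wins_Ab :: "nat \<Rightarrow> (nat list \<times> nat) set \<Rightarrow> bool" where
  "bob_wins_Ab n B \<longleftrightarrow> (\<exists>\<sigma>. valid_strategy \<sigma> \<and>
     (\<forall>a \<in> move_seqs n. (a, count_list (bob_moves \<sigma> a) 1) \<in> B))"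

definition bob_wins_aB :: "nat \<Rightarrow> (nat \<times> nat list) set \<Rightarrow> bool" where
  "bob_wins_aB n B \<longleftrightarrow> (\<exists>\<sigma>. valid_strategy \<sigma> \<and>
     (\<forall>a \<in> move_seqs n. (count_list a 1, bob_moves \<sigma> a) \<in> B))"

text \<open>Each outcome is independently won by Bob with probability p; the probability of a
given set B of Bob-won outcomes is p^|B| (1-p)^(|O|-|B|).\<close>

definition P_Ab :: "nat \<Rightarrow> real \<Rightarrow> real" where
  "P_Ab n p = (\<Sum>B \<in> {B. B \<subseteq> outcomes_Ab n \<and> bob_wins_Ab n B}.
      p ^ card B * (1 - p) ^ (card (outcomes_Ab n) - card B))"

definition P_aB :: "nat \<Rightarrow> real \<Rightarrow> real" where
  "P_aB n p = (\<Sum>B \<in> {B. B \<subseteq> outcomes_aB n \<and> bob_wins_aB n B}.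
      p ^ card B * (1 - p) ^ (card (outcomes_aB n) - card B))"

definition pc_Ab :: real where
  "pc_Ab = Sup {p \<in> {0..1}. (\<lambda>n. P_Ab n p) \<longlonglongrightarrow> 0}"

definition pc_aB :: real where
  "pc_aB = Inf {p \<in> {0..1}. (\<lambda>n. P_aB n p) \<longlonglongrightarrow> 1}"

end

theory Submission
  imports Defs
begin

text \<open>Both games are finite games of perfect information, so "Bob has a winning strategy" unfolds
  into an alternating recursion over positions, and P is the probability of this recursive event
  when every outcome is independently Bob's with probability p. The four bounds come from four
  estimates of that probability.

  \<^item> Ab, p < 1/2: Alice fixes her whole move sequence a in advance and wins if the n + 1 outcomes
    (a, k) are all hers. The outcome sets of the 2^n sequences are disjoint, hence
    P \<le> (1 - (1 - p)^(n+1))^(2^n) \<longrightarrow> 0.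
  \<^item> aB, p > (3 - \<surd>5)/2: independence of disjoint subtrees and Harris' inequality give
    P \<ge> h(n) with h(0) = p and h(m + 1) = (1 - (1 - h(m))^2)^2, and h(m) \<longrightarrow> 1 when p lies
    above the fixed point (3 - \<surd>5)/2 of this recursion.
  \<^item> Ab, p \<ge> 7/8, and aB, p \<le> 1/16: the player choosing the branch of the game tree (Alice in
    Ab, Bob in aB) plays against an opponent who only decides whether a counter grows. The
    probability that the chooser wins from all counter values in a set K at once is bounded by a
    product over the gaps of K, whose two parameters are driven to 0 by a quadratic recursion as
    soon as a leaf is won with probability at most 1/8.\<close>

section \<open>Random subsets\<close>

definition rand_prob :: "real \<Rightarrow> 'a set \<Rightarrow> ('a set \<Rightarrow> bool) \<Rightarrow> real" where
  "rand_prob p U Q = (\<Sum>B | B \<subseteq> U \<and> Q B. p ^ card B * (1 - p) ^ (card U - card B))"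

lemma finite_subsets_with: "finite U \<Longrightarrow> finite {B. B \<subseteq> U \<and> Q B}"
  by (auto intro: finite_subset[of _ "Pow U"])

lemma rand_prob_cong: "(\<And>B. B \<subseteq> U \<Longrightarrow> Q B = R B) \<Longrightarrow> rand_prob p U Q = rand_prob p U R"
  unfolding rand_prob_def by (rule sum.cong) auto

lemma rand_prob_empty: "rand_prob p {} Q = (if Q {} then 1 else 0)"
proof -
  have "{B. B \<subseteq> {} \<and> Q B} = (if Q {} then {{}} else {})" by auto
  then show ?thesis by (simp add: rand_prob_def)
qed

lemma rand_prob_insert:
  assumes "finite U" and "x \<notin> U"
  shows "rand_prob p (insert x U) Q
      = p * rand_prob p U (\<lambda>B. Q (insert x B)) + (1 - p) * rand_prob p U Q"
proof -
  define w where "w V B = p ^ card B * (1 - p) ^ (card V - card B)" for V B :: "'a set"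
  let ?out = "{B. B \<subseteq> U \<and> Q B}" and ?inn = "{B. B \<subseteq> U \<and> Q (insert x B)}"
  have split: "{B. B \<subseteq> insert x U \<and> Q B} = ?out \<union> insert x ` ?inn"
  proof (intro set_eqI iffI)
    fix B assume B: "B \<in> {B. B \<subseteq> insert x U \<and> Q B}"
    show "B \<in> ?out \<union> insert x ` ?inn"
    proof (cases "x \<in> B")
      case True
      then have "B = insert x (B - {x})" "B - {x} \<in> ?inn" using B by (auto simp: insert_absorb)
      then show ?thesis by blast
    qed (use B in auto)
  qed auto
  have w_out: "w (insert x U) B = (1 - p) * w U B" if "B \<in> ?out" for B
  proof -
    have "card B \<le> card U" using that assms(1) by (simp add: card_mono)
    then show ?thesis using assms by (simp add: w_def Suc_diff_le)
  qed
  have w_inn: "w (insert x U) (insert x B) = p * w U B" if "B \<in> ?inn" for B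
  proof -
    have "finite B" "x \<notin> B" "card B \<le> card U"
      using that assms by (auto intro: finite_subset card_mono)
    then show ?thesis using assms by (simp add: w_def)
  qed
  have "rand_prob p (insert x U) Q = sum (w (insert x U)) ?out
      + sum (w (insert x U)) (insert x ` ?inn)"
    unfolding rand_prob_def w_def[symmetric] split using assms
    by (intro sum.union_disjoint) (auto simp: finite_subsets_with)
  also have "sum (w (insert x U)) (insert x ` ?inn) = (\<Sum>B\<in>?inn. w (insert x U) (insert x B))"
    using assms(2) by (intro sum.reindex[unfolded comp_def]) (auto simp: inj_on_def)
  also have "\<dots> = p * rand_prob p U (\<lambda>B. Q (insert x B))"
    unfolding rand_prob_def w_def[symmetric] sum_distrib_left by (rule sum.cong) (auto simp: w_inn)
  also have "sum (w (insert x U)) ?out = (1 - p) * rand_prob p U Q"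
    unfolding rand_prob_def w_def[symmetric] sum_distrib_left by (rule sum.cong) (auto simp: w_out)
  finally show ?thesis by simp
qed

lemma rand_prob_nonneg: "0 \<le> p \<Longrightarrow> p \<le> 1 \<Longrightarrow> 0 \<le> rand_prob p U Q"
  unfolding rand_prob_def by (intro sum_nonneg) simp

lemma rand_prob_mono:
  assumes "finite U" "0 \<le> p" "p \<le> 1" "\<And>B. B \<subseteq> U \<Longrightarrow> Q B \<Longrightarrow> R B"
  shows "rand_prob p U Q \<le> rand_prob p U R"
  unfolding rand_prob_def using assms by (intro sum_mono2 finite_subsets_with) auto

lemma rand_prob_True: "finite U \<Longrightarrow> rand_prob p U (\<lambda>_. True) = 1"
  by (induction U rule: finite_induct)
    (simp_all add: rand_prob_empty rand_prob_insert algebra_simps)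

lemma rand_prob_False: "rand_prob p U (\<lambda>_. False) = 0"
  by (simp add: rand_prob_def)

lemma rand_prob_disj:
  assumes "finite U"
  shows "rand_prob p U (\<lambda>B. Q B \<or> R B) + rand_prob p U (\<lambda>B. Q B \<and> R B)
       = rand_prob p U Q + rand_prob p U R"
proof -
  have "{B. B \<subseteq> U \<and> (Q B \<or> R B)} = {B. B \<subseteq> U \<and> Q B} \<union> {B. B \<subseteq> U \<and> R B}"
    and "{B. B \<subseteq> U \<and> Q B \<and> R B} = {B. B \<subseteq> U \<and> Q B} \<inter> {B. B \<subseteq> U \<and> R B}" by auto
  then show ?thesis
    unfolding rand_prob_def by (simp only:) (intro sum.union_inter finite_subsets_with assms)
qed

lemma rand_prob_not: "finite U \<Longrightarrow> rand_prob p U (\<lambda>B. \<not> Q B) = 1 - rand_prob p U Q"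
  using rand_prob_disj[of U p Q "\<lambda>B. \<not> Q B"] by (simp add: rand_prob_True rand_prob_False)

lemma rand_prob_le_1: "finite U \<Longrightarrow> 0 \<le> p \<Longrightarrow> p \<le> 1 \<Longrightarrow> rand_prob p U Q \<le> 1"
  using rand_prob_not[of U p Q] rand_prob_nonneg[of p U "\<lambda>B. \<not> Q B"] by simp

lemma rand_prob_Bex_le:
  assumes "finite U" "0 \<le> p" "p \<le> 1" "finite I"
  shows "rand_prob p U (\<lambda>B. \<exists>i\<in>I. Q i B) \<le> (\<Sum>i\<in>I. rand_prob p U (Q i))"
  using assms(4)
proof (induction I rule: finite_induct)
  case (insert j I)
  have "rand_prob p U (\<lambda>B. \<exists>i\<in>insert j I. Q i B) = rand_prob p U (\<lambda>B. Q j B \<or> (\<exists>i\<in>I. Q i B))"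
    by (rule rand_prob_cong) auto
  also have "\<dots> \<le> rand_prob p U (Q j) + rand_prob p U (\<lambda>B. \<exists>i\<in>I. Q i B)"
    using rand_prob_disj[OF assms(1), of p "Q j" "\<lambda>B. \<exists>i\<in>I. Q i B"]
      rand_prob_nonneg[OF assms(2,3), of U "\<lambda>B. Q j B \<and> (\<exists>i\<in>I. Q i B)"] by linarith
  finally show ?case using insert by simp
qed (simp add: rand_prob_False)

lemma rand_prob_member:
  assumes "finite U" "x \<in> U"
  shows "rand_prob p U (\<lambda>B. x \<in> B) = p"
proof -
  have "rand_prob p (insert x (U - {x})) (\<lambda>B. x \<in> B)
      = p * rand_prob p (U - {x}) (\<lambda>B. x \<in> insert x B)
        + (1 - p) * rand_prob p (U - {x}) (\<lambda>B. x \<in> B)"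
    using assms(1) by (intro rand_prob_insert) auto
  also have "rand_prob p (U - {x}) (\<lambda>B. x \<in> B) = rand_prob p (U - {x}) (\<lambda>_. False)"
    by (rule rand_prob_cong) auto
  finally show ?thesis using assms by (simp add: insert_absorb rand_prob_True rand_prob_False)
qed

definition determined_by :: "('a set \<Rightarrow> bool) \<Rightarrow> 'a set \<Rightarrow> bool" where
  "determined_by Q S \<longleftrightarrow> (\<forall>B. Q B = Q (B \<inter> S))"

lemma determined_byD: "determined_by Q S \<Longrightarrow> Q B = Q (B \<inter> S)"
  by (simp add: determined_by_def)

lemma determined_by_insert_outside:
  assumes "determined_by Q S" "x \<notin> S"
  shows "Q (insert x B) = Q B"
proof -
  have "Q (insert x B) = Q (insert x B \<inter> S)" by (rule determined_byD[OF assms(1)])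
  also have "insert x B \<inter> S = B \<inter> S" using assms(2) by auto
  also have "Q (B \<inter> S) = Q B" by (rule determined_byD[OF assms(1), symmetric])
  finally show ?thesis .
qed

lemma determined_by_insert:
  assumes "determined_by Q S"
  shows "determined_by (\<lambda>B. Q (insert x B)) S"
  unfolding determined_by_def
proof
  fix B
  have "Q (insert x B) = Q (insert x B \<inter> S)" by (rule determined_byD[OF assms])
  also have "insert x B \<inter> S = insert x (B \<inter> S) \<inter> S" by auto
  also have "Q \<dots> = Q (insert x (B \<inter> S))" by (rule determined_byD[OF assms, symmetric])
  finally show "Q (insert x B) = Q (insert x (B \<inter> S))" .
qed

lemma determined_by_mono:
  assumes "determined_by Q S" "S \<subseteq> S'"
  shows "determined_by Q S'"
  unfolding determined_by_def
proof
  fix B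
  have "Q B = Q (B \<inter> S)" by (rule determined_byD[OF assms(1)])
  also have "B \<inter> S = B \<inter> S' \<inter> S" using assms(2) by auto
  also have "Q \<dots> = Q (B \<inter> S')" by (rule determined_byD[OF assms(1), symmetric])
  finally show "Q B = Q (B \<inter> S')" .
qed

lemma determined_by_not:
  assumes "determined_by Q S"
  shows "determined_by (\<lambda>B. \<not> Q B) S"
  unfolding determined_by_def
proof
  show "(\<not> Q B) = (\<not> Q (B \<inter> S))" for B using determined_byD[OF assms, of B] by simp
qed

lemma determined_by_Ball:
  assumes "\<And>i. i \<in> I \<Longrightarrow> determined_by (Q i) S"
  shows "determined_by (\<lambda>B. \<forall>i\<in>I. Q i B) S"
  unfolding determined_by_def
proof
  fix B
  have "Q i B = Q i (B \<inter> S)" if "i \<in> I" for i using assms[OF that] by (rule determined_byD)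
  then show "(\<forall>i\<in>I. Q i B) = (\<forall>i\<in>I. Q i (B \<inter> S))" by simp
qed

lemma determined_by_conj:
  "determined_by Q S \<Longrightarrow> determined_by R S \<Longrightarrow> determined_by (\<lambda>B. Q B \<and> R B) S"
  unfolding determined_by_def by blast

lemma determined_by_Bex:
  assumes "\<And>i. i \<in> I \<Longrightarrow> determined_by (Q i) S"
  shows "determined_by (\<lambda>B. \<exists>i\<in>I. Q i B) S"
  unfolding determined_by_def
proof
  fix B
  have "Q i B = Q i (B \<inter> S)" if "i \<in> I" for i using assms[OF that] by (rule determined_byD)
  then show "(\<exists>i\<in>I. Q i B) = (\<exists>i\<in>I. Q i (B \<inter> S))" by auto
qed

lemma rand_prob_insert_outside:
  assumes "finite U" "x \<notin> U" "determined_by Q S" "x \<notin> S"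
  shows "rand_prob p (insert x U) Q = rand_prob p U Q"
proof -
  have "rand_prob p U (\<lambda>B. Q (insert x B)) = rand_prob p U Q"
    using determined_by_insert_outside[OF assms(3,4)] by (intro rand_prob_cong) simp
  then have "rand_prob p (insert x U) Q = p * rand_prob p U Q + (1 - p) * rand_prob p U Q"
    using rand_prob_insert[OF assms(1,2), of p Q] by simp
  then show ?thesis by (simp add: algebra_simps)
qed

lemma rand_prob_indep:
  assumes "finite U" "S \<inter> T = {}" "determined_by Q S" "determined_by R T"
  shows "rand_prob p U (\<lambda>B. Q B \<and> R B) = rand_prob p U Q * rand_prob p U R"
  using assms
proof (induction U arbitrary: Q R S T rule: finite_induct)
  case (insert x U)
  have step: "rand_prob p (insert x U) (\<lambda>B. Q B \<and> R B)
      = rand_prob p (insert x U) Q * rand_prob p (insert x U) R"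
    if "S \<inter> T = {}" "determined_by Q S" "determined_by R T" "x \<notin> T" for Q R S T
  proof -
    have R_x: "R (insert x B) = R B" for B using determined_by_insert_outside that(3,4) .
    have "rand_prob p (insert x U) (\<lambda>B. Q B \<and> R B)
        = p * rand_prob p U (\<lambda>B. Q (insert x B) \<and> R B)
          + (1 - p) * rand_prob p U (\<lambda>B. Q B \<and> R B)"
      using insert.hyps by (simp add: rand_prob_insert R_x)
    also have "\<dots> = (p * rand_prob p U (\<lambda>B. Q (insert x B)) + (1 - p) * rand_prob p U Q)
        * rand_prob p U R"
      using insert.IH[OF that(1) determined_by_insert[OF that(2)] that(3)] insert.IH[OF that(1-3)]
      by (simp add: algebra_simps)
    also have "\<dots> = rand_prob p (insert x U) Q * rand_prob p (insert x U) R"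
      using insert.hyps rand_prob_insert_outside[OF _ _ that(3,4)] by (simp add: rand_prob_insert)
    finally show ?thesis .
  qed
  show ?case
  proof (cases "x \<in> T")
    case True
    then have "x \<notin> S" using insert.prems(1) by blast
    then show ?thesis using step[of T S R Q] insert.prems
      by (simp add: conj_commute Int_commute mult.commute)
  next
    case False
    show ?thesis by (rule step[OF insert.prems False])
  qed
qed (simp add: rand_prob_empty)

lemma rand_prob_Ball_indep:
  assumes "finite U" "finite I" "\<And>i. i \<in> I \<Longrightarrow> determined_by (Q i) (S i)"
    and "\<And>i j. i \<in> I \<Longrightarrow> j \<in> I \<Longrightarrow> i \<noteq> j \<Longrightarrow> S i \<inter> S j = {}"
  shows "rand_prob p U (\<lambda>B. \<forall>i\<in>I. Q i B) = (\<Prod>i\<in>I. rand_prob p U (Q i))"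
  using assms(2-4)
proof (induction I rule: finite_induct)
  case (insert j I)
  have "rand_prob p U (\<lambda>B. \<forall>i\<in>insert j I. Q i B) = rand_prob p U (\<lambda>B. Q j B \<and> (\<forall>i\<in>I. Q i B))"
    by (rule rand_prob_cong) simp
  also have "\<dots> = rand_prob p U (Q j) * rand_prob p U (\<lambda>B. \<forall>i\<in>I. Q i B)"
  proof (rule rand_prob_indep[OF assms(1)])
    show "S j \<inter> (\<Union>i\<in>I. S i) = {}" using insert.prems(2) insert.hyps(2) by fastforce
    show "determined_by (\<lambda>B. \<forall>i\<in>I. Q i B) (\<Union>i\<in>I. S i)"
      using insert.prems(1)
      by (intro determined_by_Ball) (meson UN_upper determined_by_mono insertCI)
  qed (use insert.prems(1) in simp)
  finally show ?case using insert by simp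
qed (simp add: rand_prob_True assms(1))

lemma rand_prob_avoid:
  assumes "finite U" "S \<subseteq> U"
  shows "rand_prob p U (\<lambda>B. \<forall>x\<in>S. x \<notin> B) = (1 - p) ^ card S"
proof -
  have "finite S" using assms finite_subset by auto
  then have "rand_prob p U (\<lambda>B. \<forall>x\<in>S. x \<notin> B) = (\<Prod>x\<in>S. rand_prob p U (\<lambda>B. x \<notin> B))"
    by (intro rand_prob_Ball_indep[OF assms(1), where S = "\<lambda>x. {x}"]) (auto simp: determined_by_def)
  also have "\<dots> = (\<Prod>x\<in>S. 1 - p)"
    using assms by (intro prod.cong) (auto simp: rand_prob_not rand_prob_member)
  finally show ?thesis by simp
qed

lemma rand_prob_hit:
  assumes "finite U" "S \<subseteq> U"
  shows "rand_prob p U (\<lambda>B. \<exists>x\<in>S. x \<in> B) = 1 - (1 - p) ^ card S"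
proof -
  have "rand_prob p U (\<lambda>B. \<exists>x\<in>S. x \<in> B) = rand_prob p U (\<lambda>B. \<not> (\<forall>x\<in>S. x \<notin> B))" by simp
  also have "\<dots> = 1 - (1 - p) ^ card S"
    by (simp only: rand_prob_not[OF assms(1)] rand_prob_avoid[OF assms])
  finally show ?thesis .
qed

lemma rand_prob_disj_indep_ge:
  assumes U: "finite U" and p: "0 \<le> p" "p \<le> 1" and "S \<inter> T = {}"
    and "determined_by Q S" "determined_by R T"
    and "h \<le> rand_prob p U Q" "h \<le> rand_prob p U R"
  shows "1 - (1 - h)^2 \<le> rand_prob p U (\<lambda>B. Q B \<or> R B)"
proof -
  have "rand_prob p U (\<lambda>B. \<not> Q B \<and> \<not> R B) = (1 - rand_prob p U Q) * (1 - rand_prob p U R)"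
    using rand_prob_indep[OF U assms(4) determined_by_not determined_by_not, OF assms(5,6)]
    by (simp add: rand_prob_not[OF U])
  also have "\<dots> \<le> (1 - h) * (1 - h)"
    using assms(7,8) rand_prob_le_1[OF U p, of Q] rand_prob_le_1[OF U p, of R]
    by (intro mult_mono) auto
  finally show ?thesis using rand_prob_not[OF U, of p "\<lambda>B. \<not> Q B \<and> \<not> R B"]
    by (simp add: power2_eq_square)
qed

lemma harris_inequality:
  assumes "finite U" "0 \<le> p" "p \<le> 1" "mono Q" "mono R"
  shows "rand_prob p U Q * rand_prob p U R \<le> rand_prob p U (\<lambda>B. Q B \<and> R B)"
  using assms(1,4,5)
proof (induction U arbitrary: Q R rule: finite_induct)
  case (insert x U)
  let ?Q1 = "rand_prob p U (\<lambda>B. Q (insert x B))" and ?Q0 = "rand_prob p U Q"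
  let ?R1 = "rand_prob p U (\<lambda>B. R (insert x B))" and ?R0 = "rand_prob p U R"
  have mono_x: "mono (\<lambda>B. F (insert x B))" if "mono F" for F :: "'a set \<Rightarrow> bool"
    using that by (simp add: mono_def) (meson insert_mono)
  have "Q B \<Longrightarrow> Q (insert x B)" "R B \<Longrightarrow> R (insert x B)" for B
    using insert.prems by (metis le_boolD monoD subset_insertI)+
  then have "?Q0 \<le> ?Q1" "?R0 \<le> ?R1"
    by (intro rand_prob_mono insert.hyps assms(2,3); blast)+
  then have "0 \<le> p * (1 - p) * ((?Q1 - ?Q0) * (?R1 - ?R0))"
    using assms(2,3) by (intro mult_nonneg_nonneg) auto
  then have "rand_prob p (insert x U) Q * rand_prob p (insert x U) R
      \<le> p * (?Q1 * ?R1) + (1 - p) * (?Q0 * ?R0)"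
    using insert.hyps by (simp add: rand_prob_insert algebra_simps)
  also have "\<dots> \<le> p * rand_prob p U (\<lambda>B. Q (insert x B) \<and> R (insert x B))
      + (1 - p) * rand_prob p U (\<lambda>B. Q B \<and> R B)"
    using insert.IH[OF mono_x[OF insert.prems(1)] mono_x[OF insert.prems(2)]]
      insert.IH[OF insert.prems] assms(2,3)
    by (intro add_mono mult_left_mono) auto
  also have "\<dots> = rand_prob p (insert x U) (\<lambda>B. Q B \<and> R B)"
    using insert.hyps by (simp add: rand_prob_insert)
  finally show ?case .
qed (simp add: rand_prob_empty)

section \<open>The games as recursions over positions\<close>

fun interleave :: "nat list \<Rightarrow> nat list \<Rightarrow> nat list" where
  "interleave (x # xs) (y # ys) = x # y # interleave xs ys"
| "interleave _ _ = []"

fun alice_part :: "nat list \<Rightarrow> nat list" where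
  "alice_part [] = []"
| "alice_part [x] = [x]"
| "alice_part (x # y # r) = x # alice_part r"

fun bob_part :: "nat list \<Rightarrow> nat list" where
  "bob_part [] = []"
| "bob_part [x] = []"
| "bob_part (x # y # r) = y # bob_part r"

lemma interleave_snoc:
  "length xs = length ys \<Longrightarrow> interleave (xs @ [x]) (ys @ [y]) = interleave xs ys @ [x, y]"
  by (induction xs ys rule: list_induct2) auto

lemma alice_part_interleave_snoc:
  "length xs = length ys \<Longrightarrow> alice_part (interleave xs ys @ [x]) = xs @ [x]"
  by (induction xs ys rule: list_induct2) auto

lemma bob_part_interleave_snoc:
  "length xs = length ys \<Longrightarrow> bob_part (interleave xs ys @ [x]) = ys"
  by (induction xs ys rule: list_induct2) auto

text \<open>Positions of Ab: Alice's moves so far, the number of 1s Bob has played, and the number of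
  rounds still to be played.\<close>

fun bob_wins_Ab_from :: "(nat list \<times> nat) set \<Rightarrow> nat \<Rightarrow> nat list \<Rightarrow> nat \<Rightarrow> bool" where
  "bob_wins_Ab_from B 0 pre c = ((pre, c) \<in> B)"
| "bob_wins_Ab_from B (Suc m) pre c
    = (\<forall>x\<in>{1,2}. bob_wins_Ab_from B m (pre @ [x]) (Suc c) \<or> bob_wins_Ab_from B m (pre @ [x]) c)"

definition Ab_strategy :: "nat \<Rightarrow> (nat list \<times> nat) set \<Rightarrow> nat list \<Rightarrow> nat" where
  "Ab_strategy n B h
      = (if bob_wins_Ab_from B (n - length (alice_part h)) (alice_part h)
              (Suc (count_list (bob_part h) 1))
         then 1 else 2)"

lemma valid_Ab_strategy: "valid_strategy (Ab_strategy n B)"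
  by (simp add: valid_strategy_def Ab_strategy_def)

lemma Ab_strategy_wins:
  assumes "bob_wins_Ab_from B m pre c" "length pre = length bs" "count_list bs 1 = c"
    and "length pre + m = n" "length a' = m" "set a' \<subseteq> {1, 2}"
  shows "(pre @ a', c + count_list (bob_play (Ab_strategy n B) (interleave pre bs) a') 1) \<in> B"
  using assms
proof (induction a' arbitrary: m pre bs c)
  case Nil
  then show ?case by simp
next
  case (Cons x r)
  then obtain m' where m: "m = Suc m'" by (cases m) auto
  have x: "x \<in> {1, 2}" using Cons.prems(6) by simp
  have r: "length r = m'" "set r \<subseteq> {1, 2}" using Cons.prems(5,6) m by auto
  let ?h = "interleave pre bs"
  let ?y = "Ab_strategy n B (?h @ [x])"
  have ap: "alice_part (?h @ [x]) = pre @ [x]" using Cons.prems(2)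
    by (rule alice_part_interleave_snoc)
  have bp: "bob_part (?h @ [x]) = bs" using Cons.prems(2) by (rule bob_part_interleave_snoc)
  have rem: "n - length (pre @ [x]) = m'" using Cons.prems(4) m by simp
  have y: "?y = (if bob_wins_Ab_from B m' (pre @ [x]) (Suc c) then 1 else 2)"
    unfolding Ab_strategy_def ap bp rem Cons.prems(3) ..
  have bp2: "bob_play (Ab_strategy n B) ?h (x # r)
      = ?y # bob_play (Ab_strategy n B) (interleave (pre @ [x]) (bs @ [?y])) r"
    using Cons.prems(2) by (simp add: Let_def interleave_snoc)
  have disj: "bob_wins_Ab_from B m' (pre @ [x]) (Suc c) \<or> bob_wins_Ab_from B m' (pre @ [x]) c"
    using Cons.prems(1) m x by auto
  show ?case
  proof (cases "bob_wins_Ab_from B m' (pre @ [x]) (Suc c)")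
    case True
    then have y1: "?y = 1" using y by simp
    have "(pre @ [x] @ r, Suc c
        + count_list (bob_play (Ab_strategy n B) (interleave (pre @ [x]) (bs @ [1])) r) 1) \<in> B"
      using Cons.IH[where m = m' and pre = "pre @ [x]" and bs = "bs @ [1]" and c = "Suc c"]
        True Cons.prems(2,3,4) m r
      by simp
    then show ?thesis using bp2 y1 by simp
  next
    case False
    then have y2: "?y = 2" using y by simp
    have b: "bob_wins_Ab_from B m' (pre @ [x]) c" using disj False by simp
    have "(pre @ [x] @ r, c
        + count_list (bob_play (Ab_strategy n B) (interleave (pre @ [x]) (bs @ [2])) r) 1) \<in> B"
      using Cons.IH[where m = m' and pre = "pre @ [x]" and bs = "bs @ [2]" and c = c]
        b Cons.prems(2,3,4) m r
      by simp
    then show ?thesis using bp2 y2 by simp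
  qed
qed

lemma bob_wins_Ab_from_strategy:
  assumes "valid_strategy \<sigma>"
    "\<forall>a'. length a' = m \<and> set a' \<subseteq> {1, 2} \<longrightarrow> (pre @ a', c + count_list (bob_play \<sigma> h a') 1) \<in> B"
  shows "bob_wins_Ab_from B m pre c"
  using assms(2)
proof (induction m arbitrary: pre c h)
  case 0
  then show ?case using spec[OF 0, of "[]"] by simp
next
  case (Suc m)
  show ?case
  proof (simp only: bob_wins_Ab_from.simps, intro ballI)
    fix x :: nat assume x: "x \<in> {1, 2}"
    let ?y = "\<sigma> (h @ [x])"
    have y: "?y \<in> {1, 2}" using assms(1) by (simp add: valid_strategy_def)
    let ?c = "c + (if ?y = 1 then 1 else 0)"
    have "\<forall>r. length r = m \<and> set r \<subseteq> {1, 2}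
        \<longrightarrow> ((pre @ [x]) @ r, ?c + count_list (bob_play \<sigma> (h @ [x, ?y]) r) 1) \<in> B"
    proof (intro allI impI)
      fix r :: "nat list" assume r: "length r = m \<and> set r \<subseteq> {1, 2}"
      have "(pre @ (x # r), c + count_list (bob_play \<sigma> h (x # r)) 1) \<in> B"
        using Suc.prems x r by (intro Suc.prems[rule_format]) auto
      then show "((pre @ [x]) @ r, ?c + count_list (bob_play \<sigma> (h @ [x, ?y]) r) 1) \<in> B"
        by (cases "\<sigma> (h @ [x]) = 1") (simp_all add: Let_def)
    qed
    then have "bob_wins_Ab_from B m (pre @ [x]) ?c" by (rule Suc.IH)
    then show "bob_wins_Ab_from B m (pre @ [x]) (Suc c) \<or> bob_wins_Ab_from B m (pre @ [x]) c"
      using y by (auto split: if_splits)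
  qed
qed

lemma bob_wins_Ab_iff: "bob_wins_Ab n B \<longleftrightarrow> bob_wins_Ab_from B n [] 0"
proof
  assume "bob_wins_Ab n B"
  then obtain \<sigma> where s: "valid_strategy \<sigma>"
    and w: "\<forall>a\<in>move_seqs n. (a, count_list (bob_moves \<sigma> a) 1) \<in> B"
    unfolding bob_wins_Ab_def by blast
  have "\<forall>a'. length a' = n \<and> set a' \<subseteq> {1, 2} \<longrightarrow> ([] @ a', 0 + count_list (bob_play \<sigma> [] a') 1) \<in> B"
    using w by (simp add: move_seqs_def bob_moves_def)
  then show "bob_wins_Ab_from B n [] 0" by (rule bob_wins_Ab_from_strategy[OF s])
next
  assume b: "bob_wins_Ab_from B n [] 0"
  have "\<forall>a\<in>move_seqs n. (a, count_list (bob_moves (Ab_strategy n B) a) 1) \<in> B"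
  proof
    fix a assume "a \<in> move_seqs n"
    then have "length a = n" "set a \<subseteq> {1, 2}" by (auto simp: move_seqs_def)
    from Ab_strategy_wins[OF b _ _ _ this, of "[]"]
    show "(a, count_list (bob_moves (Ab_strategy n B) a) 1) \<in> B"
      by (simp add: bob_moves_def)
  qed
  then show "bob_wins_Ab n B" unfolding bob_wins_Ab_def using valid_Ab_strategy by blast
qed

text \<open>Positions of aB: the number of 1s Alice has played, Bob's moves so far, and the number of
  rounds still to be played.\<close>

fun bob_wins_aB_from :: "(nat \<times> nat list) set \<Rightarrow> nat \<Rightarrow> nat \<Rightarrow> nat list \<Rightarrow> bool" where
  "bob_wins_aB_from B 0 c pb = ((c, pb) \<in> B)"
| "bob_wins_aB_from B (Suc m) c pb
    = (\<forall>x::nat\<in>{1,2}. \<exists>y\<in>{1,2}. bob_wins_aB_from B m (if x = 1 then Suc c else c) (pb @ [y]))"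

definition aB_strategy :: "nat \<Rightarrow> (nat \<times> nat list) set \<Rightarrow> nat list \<Rightarrow> nat" where
  "aB_strategy n B h
      = (if bob_wins_aB_from B (n - Suc (length (bob_part h))) (count_list (alice_part h) 1)
              (bob_part h @ [1])
         then 1 else 2)"

lemma valid_aB_strategy: "valid_strategy (aB_strategy n B)"
  by (simp add: valid_strategy_def aB_strategy_def)

lemma aB_strategy_wins:
  assumes "bob_wins_aB_from B m c pb" "length as = length pb" "count_list as 1 = c"
    and "length pb + m = n" "length a' = m" "set a' \<subseteq> {1, 2}"
  shows "(c + count_list a' 1, pb @ bob_play (aB_strategy n B) (interleave as pb) a') \<in> B"
  using assms
proof (induction a' arbitrary: m as pb c)
  case Nil
  then show ?case by simp
next
  case (Cons x r)
  then obtain m' where m: "m = Suc m'" by (cases m) auto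
  have x: "x \<in> {1, 2}" using Cons.prems(6) by simp
  have r: "length r = m'" "set r \<subseteq> {1, 2}" using Cons.prems(5,6) m by auto
  let ?h = "interleave as pb"
  let ?y = "aB_strategy n B (?h @ [x])"
  let ?c = "if x = 1 then Suc c else c"
  have ap: "alice_part (?h @ [x]) = as @ [x]" using Cons.prems(2)
    by (rule alice_part_interleave_snoc)
  have bp: "bob_part (?h @ [x]) = pb" using Cons.prems(2) by (rule bob_part_interleave_snoc)
  have rem: "n - Suc (length pb) = m'" using Cons.prems(4) m by simp
  have cnt: "count_list (as @ [x]) 1 = ?c" using Cons.prems(3) by simp
  have y: "?y = (if bob_wins_aB_from B m' ?c (pb @ [1]) then 1 else 2)"
    unfolding aB_strategy_def ap bp rem cnt ..
  have bp2: "bob_play (aB_strategy n B) ?h (x # r)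
      = ?y # bob_play (aB_strategy n B) (interleave (as @ [x]) (pb @ [?y])) r"
    using Cons.prems(2) by (simp add: Let_def interleave_snoc)
  have ex: "\<exists>y\<in>{1,2}. bob_wins_aB_from B m' ?c (pb @ [y])" using Cons.prems(1) m x by auto
  have cnt2: "c + count_list (x # r) 1 = ?c + count_list r 1" by simp
  obtain y0 where y0: "y0 \<in> {1,2}" "bob_wins_aB_from B m' ?c (pb @ [y0])" "?y = y0"
  proof (cases "bob_wins_aB_from B m' ?c (pb @ [1])")
    case True
    then show ?thesis using that y by simp
  next
    case False
    then have "bob_wins_aB_from B m' ?c (pb @ [2])" using ex by auto
    then show ?thesis using that y False by simp
  qed
  have "(?c + count_list r 1,
         (pb @ [y0]) @ bob_play (aB_strategy n B) (interleave (as @ [x]) (pb @ [y0])) r) \<in> B"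
    using Cons.IH[where m = m' and as = "as @ [x]" and pb = "pb @ [y0]" and c = ?c]
      y0(2) Cons.prems(2,4) cnt m r
    by simp
  then show ?case using bp2 y0(3) cnt2 by simp
qed

lemma bob_wins_aB_from_strategy:
  assumes "valid_strategy \<sigma>"
    "\<forall>a'. length a' = m \<and> set a' \<subseteq> {1, 2} \<longrightarrow> (c + count_list a' 1, pb @ bob_play \<sigma> h a') \<in> B"
  shows "bob_wins_aB_from B m c pb"
  using assms(2)
proof (induction m arbitrary: c pb h)
  case 0
  then show ?case using spec[OF 0, of "[]"] by simp
next
  case (Suc m)
  show ?case
  proof (simp only: bob_wins_aB_from.simps, intro ballI)
    fix x :: nat assume x: "x \<in> {1, 2}"
    let ?y = "\<sigma> (h @ [x])"
    let ?c = "if x = 1 then Suc c else c"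
    have y: "?y \<in> {1, 2}" using assms(1) by (simp add: valid_strategy_def)
    have "\<forall>r. length r = m \<and> set r \<subseteq> {1, 2}
        \<longrightarrow> (?c + count_list r 1, (pb @ [?y]) @ bob_play \<sigma> (h @ [x, ?y]) r) \<in> B"
    proof (intro allI impI)
      fix r :: "nat list" assume r: "length r = m \<and> set r \<subseteq> {1, 2}"
      have "(c + count_list (x # r) 1, pb @ bob_play \<sigma> h (x # r)) \<in> B"
        using Suc.prems x r by (intro Suc.prems[rule_format]) auto
      then show "(?c + count_list r 1, (pb @ [?y]) @ bob_play \<sigma> (h @ [x, ?y]) r) \<in> B"
        by (cases "x = 1") (simp_all add: Let_def)
    qed
    then have "bob_wins_aB_from B m ?c (pb @ [?y])" by (rule Suc.IH)
    then show "\<exists>y\<in>{1,2}. bob_wins_aB_from B m ?c (pb @ [y])" using y by blast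
  qed
qed

lemma bob_wins_aB_iff: "bob_wins_aB n B \<longleftrightarrow> bob_wins_aB_from B n 0 []"
proof
  assume "bob_wins_aB n B"
  then obtain \<sigma> where s: "valid_strategy \<sigma>"
    and w: "\<forall>a\<in>move_seqs n. (count_list a 1, bob_moves \<sigma> a) \<in> B"
    unfolding bob_wins_aB_def by blast
  have "\<forall>a'. length a' = n \<and> set a' \<subseteq> {1, 2} \<longrightarrow> (0 + count_list a' 1, [] @ bob_play \<sigma> [] a') \<in> B"
    using w by (simp add: move_seqs_def bob_moves_def)
  then show "bob_wins_aB_from B n 0 []" by (rule bob_wins_aB_from_strategy[OF s])
next
  assume b: "bob_wins_aB_from B n 0 []"
  have "\<forall>a\<in>move_seqs n. (count_list a 1, bob_moves (aB_strategy n B) a) \<in> B"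
  proof
    fix a assume "a \<in> move_seqs n"
    then have "length a = n" "set a \<subseteq> {1, 2}" by (auto simp: move_seqs_def)
    from aB_strategy_wins[OF b _ _ _ this, of "[]"]
    show "(count_list a 1, bob_moves (aB_strategy n B) a) \<in> B"
      by (simp add: bob_moves_def)
  qed
  then show "bob_wins_aB n B" unfolding bob_wins_aB_def using valid_aB_strategy by blast
qed

lemma finite_move_seqs: "finite (move_seqs n)"
proof -
  have "move_seqs n = {xs. set xs \<subseteq> {1, 2} \<and> length xs = n}" by (auto simp: move_seqs_def)
  then show ?thesis by (simp add: finite_lists_length_eq)
qed

lemma finite_outcomes_Ab: "finite (outcomes_Ab n)"
proof -
  have "outcomes_Ab n \<subseteq> move_seqs n \<times> {..n}" by (auto simp: outcomes_Ab_def)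
  then show ?thesis by (rule finite_subset) (simp add: finite_move_seqs)
qed

lemma finite_outcomes_aB: "finite (outcomes_aB n)"
proof -
  have "outcomes_aB n \<subseteq> {..n} \<times> move_seqs n" by (auto simp: outcomes_aB_def)
  then show ?thesis by (rule finite_subset) (simp add: finite_move_seqs)
qed

lemma P_Ab_eq_rand_prob: "P_Ab n p = rand_prob p (outcomes_Ab n) (\<lambda>B. bob_wins_Ab_from B n [] 0)"
proof -
  have "P_Ab n p = rand_prob p (outcomes_Ab n) (bob_wins_Ab n)"
    by (simp add: P_Ab_def rand_prob_def)
  also have "\<dots> = rand_prob p (outcomes_Ab n) (\<lambda>B. bob_wins_Ab_from B n [] 0)"
    by (rule rand_prob_cong) (simp add: bob_wins_Ab_iff)
  finally show ?thesis .
qed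

lemma P_aB_eq_rand_prob: "P_aB n p = rand_prob p (outcomes_aB n) (\<lambda>B. bob_wins_aB_from B n 0 [])"
proof -
  have "P_aB n p = rand_prob p (outcomes_aB n) (bob_wins_aB n)"
    by (simp add: P_aB_def rand_prob_def)
  also have "\<dots> = rand_prob p (outcomes_aB n) (\<lambda>B. bob_wins_aB_from B n 0 [])"
    by (rule rand_prob_cong) (simp add: bob_wins_aB_iff)
  finally show ?thesis .
qed

section \<open>Gap products\<close>

text \<open>It bounds the probability that the chooser below wins from all
  counter values in K at once: every value costs a factor s, except that close values are
  correlated, which is paid for by the powers of l.\<close>

fun gap_prod_list :: "real \<Rightarrow> real \<Rightarrow> nat list \<Rightarrow> real" where
  "gap_prod_list s l [] = 1"
| "gap_prod_list s l [x] = s"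
| "gap_prod_list s l (x # y # r) = (s + l ^ (y - x)) * gap_prod_list s l (y # r)"

definition gap_prod :: "real \<Rightarrow> real \<Rightarrow> nat set \<Rightarrow> real" where
  "gap_prod s l S = gap_prod_list s l (sorted_list_of_set S)"

lemma gap_prod_empty [simp]: "gap_prod s l {} = 1"
  by (simp add: gap_prod_def)

lemma gap_prod_singleton [simp]: "gap_prod s l {k} = s"
  by (simp add: gap_prod_def)

lemma gap_prod_list_nonneg: "0 \<le> s \<Longrightarrow> 0 \<le> l \<Longrightarrow> 0 \<le> gap_prod_list s l xs"
  by (induction s l xs rule: gap_prod_list.induct) auto

lemma gap_prod_nonneg: "0 \<le> s \<Longrightarrow> 0 \<le> l \<Longrightarrow> 0 \<le> gap_prod s l S"
  by (simp add: gap_prod_def gap_prod_list_nonneg)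

lemma gap_prod_insert_min:
  assumes "finite S" "S \<noteq> {}" "\<forall>x\<in>S. k < x"
  shows "gap_prod s l (insert k S) = (s + l ^ (Min S - k)) * gap_prod s l S"
proof -
  have kS: "k \<notin> S" using assms(3) by auto
  have m: "Min (insert k S) = k" using assms by (simp add: Min_insert2 less_imp_le)
  have "sorted_list_of_set (insert k S) = k # sorted_list_of_set S"
    using sorted_list_of_set_nonempty[of "insert k S"] assms(1) m kS by simp
  moreover have "sorted_list_of_set S = Min S # sorted_list_of_set (S - {Min S})"
    using sorted_list_of_set_nonempty[OF assms(1,2)] .
  ultimately show ?thesis unfolding gap_prod_def by simp
qed

definition with_succ :: "nat set \<Rightarrow> nat set" where
  "with_succ S = S \<union> Suc ` S"

lemma with_succ_empty [simp]: "with_succ {} = {}"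
  by (simp add: with_succ_def)

lemma finite_with_succ [simp]: "finite S \<Longrightarrow> finite (with_succ S)"
  by (simp add: with_succ_def)

lemma with_succ_eq_empty [simp]: "with_succ S = {} \<longleftrightarrow> S = {}"
  by (auto simp: with_succ_def)

lemma with_succ_insert: "with_succ (insert k S) = insert k (insert (Suc k) (with_succ S))"
  by (auto simp: with_succ_def)

lemma Min_with_succ:
  assumes f: "finite S" and ne: "S \<noteq> {}"
  shows "Min (with_succ S) = Min S"
proof -
  have "Min S \<in> with_succ S" using f ne by (simp add: with_succ_def)
  moreover have "\<forall>x\<in>with_succ S. Min S \<le> x"
  proof
    fix x assume "x \<in> with_succ S"
    then consider "x \<in> S" | y where "y \<in> S" "x = Suc y" by (auto simp: with_succ_def)
    then show "Min S \<le> x"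
    proof cases
      case 1 then show ?thesis using f by simp
    next
      case 2 then have "Min S \<le> y" using f by simp
      then show ?thesis using 2 by simp
    qed
  qed
  ultimately show ?thesis using f ne by (intro Min_eqI) auto
qed
lemma with_succ_greater: "\<forall>x\<in>S. k < x \<Longrightarrow> \<forall>x\<in>with_succ S. k < x"
  by (auto simp: with_succ_def)

definition gap_factor :: "real \<Rightarrow> real \<Rightarrow> nat \<Rightarrow> real" where
  "gap_factor s l t = (if t = 0 then 1 else s + l ^ t)"

lemma gap_prod_with_succ_insert_min:
  assumes "finite S" "\<forall>x\<in>S. k < x"
  shows "gap_prod s l (with_succ (insert k S))
      = (s + l) * (if S = {} then s else gap_factor s l (Min S - Suc k))
        * gap_prod s l (with_succ S)"
proof (cases "S = {}")
  case True
  have "gap_prod s l (insert k {Suc k}) = (s + l ^ (Min {Suc k} - k)) * gap_prod s l {Suc k}"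
    by (rule gap_prod_insert_min) auto
  then show ?thesis using True by (simp add: with_succ_insert)
next
  case False
  have f: "finite (with_succ S)" using assms(1) by simp
  have ne: "with_succ S \<noteq> {}" using False by simp
  have mp: "Min (with_succ S) = Min S" using Min_with_succ[OF assms(1) False] .
  have gt: "\<forall>x\<in>with_succ S. k < x" using with_succ_greater[OF assms(2)] .
  have mS: "Min S \<in> S" using assms(1) False by simp
  then have kl: "k < Min S" using assms(2) by blast
  show ?thesis
  proof (cases "Min S = Suc k")
    case True
    have "Suc k \<in> with_succ S" using mS True by (simp add: with_succ_def)
    then have e: "with_succ (insert k S) = insert k (with_succ S)" by (auto simp: with_succ_insert)
    have "gap_prod s l (insert k (with_succ S))
        = (s + l ^ (Min (with_succ S) - k)) * gap_prod s l (with_succ S)"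
      by (rule gap_prod_insert_min[OF f ne gt])
    then show ?thesis using e mp True False by (simp add: gap_factor_def)
  next
    case ne2: False
    then have lt2: "Suc k < Min S" using kl by simp
    have gt2: "\<forall>x\<in>with_succ S. Suc k < x"
    proof
      fix x assume "x \<in> with_succ S"
      then have "Min (with_succ S) \<le> x" using f by simp
      then show "Suc k < x" using mp lt2 by simp
    qed
    have A: "gap_prod s l (insert (Suc k) (with_succ S))
        = (s + l ^ (Min S - Suc k)) * gap_prod s l (with_succ S)"
      using gap_prod_insert_min[OF f ne gt2] mp by simp
    have B: "gap_prod s l (insert k (insert (Suc k) (with_succ S)))
        = (s + l ^ (Min (insert (Suc k) (with_succ S)) - k))
          * gap_prod s l (insert (Suc k) (with_succ S))"
      by (rule gap_prod_insert_min) (use f gt in auto)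
    have m3: "Min (insert (Suc k) (with_succ S)) = Suc k" using f gt2
      by (simp add: Min_insert2 less_imp_le)
    have "Min S - Suc k \<noteq> 0" using lt2 by simp
    then show ?thesis using A B m3 False by (simp add: with_succ_insert gap_factor_def)
  qed
qed

lemma sum_Pow_insert:
  assumes "finite A" "a \<notin> A"
  shows "(\<Sum>X\<in>Pow (insert a A). f X) = (\<Sum>X\<in>Pow A. f X + f (insert a X))"
proof -
  have d: "Pow A \<inter> insert a ` Pow A = {}" using assms(2) by auto
  have i: "inj_on (insert a) (Pow A)" using assms(2) unfolding inj_on_def
    by (metis Pow_iff insert_ident subsetD)
  have "(\<Sum>X\<in>Pow (insert a A). f X) = (\<Sum>X\<in>Pow A. f X) + (\<Sum>X\<in>insert a ` Pow A. f X)"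
    unfolding Pow_insert using assms(1) d by (simp add: sum.union_disjoint)
  also have "(\<Sum>X\<in>insert a ` Pow A. f X) = (\<Sum>X\<in>Pow A. f (insert a X))"
    using i by (simp add: sum.reindex)
  finally show ?thesis by (simp add: sum.distrib)
qed

definition split_term :: "real \<Rightarrow> real \<Rightarrow> nat set \<Rightarrow> nat set \<Rightarrow> real" where
  "split_term s l K K1 = gap_prod s l (with_succ K1) * gap_prod s l (with_succ (K - K1))"

definition split_sum :: "real \<Rightarrow> real \<Rightarrow> nat set \<Rightarrow> real" where
  "split_sum s l K = (\<Sum>K1\<in>Pow K. split_term s l K K1)"

text \<open>Of the two parts of a split K = K1 \<union> (K - K1), let Y be the one not containing Min K;
  split_offset records l^(Min Y - Min K), or 0 if Y is empty. Adding twice the corresponding sum to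
  split_sum is the strengthening that lets the induction on K go through.\<close>

definition split_offset :: "real \<Rightarrow> nat set \<Rightarrow> nat set \<Rightarrow> real" where
  "split_offset l K K1 =
     (let Y = (if Min K \<in> K1 then K - K1 else K1) in if Y = {} then 0 else l ^ (Min Y - Min K))"

definition split_sum_offset :: "real \<Rightarrow> real \<Rightarrow> nat set \<Rightarrow> real" where
  "split_sum_offset s l K = (\<Sum>K1\<in>Pow K. split_term s l K K1 * split_offset l K K1)"

lemma split_offset_nonneg: "0 \<le> l \<Longrightarrow> 0 \<le> split_offset l K K1"
  by (simp add: split_offset_def Let_def)

lemma split_sum_nonneg: "0 \<le> s \<Longrightarrow> 0 \<le> l \<Longrightarrow> 0 \<le> split_sum s l K"
  unfolding split_sum_def split_term_def by (intro sum_nonneg mult_nonneg_nonneg gap_prod_nonneg)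

lemma split_sum_offset_nonneg: "0 \<le> s \<Longrightarrow> 0 \<le> l \<Longrightarrow> 0 \<le> split_sum_offset s l K"
  unfolding split_sum_offset_def split_term_def
  by (intro sum_nonneg mult_nonneg_nonneg gap_prod_nonneg split_offset_nonneg)

lemma Min_split:
  assumes "finite K" "X \<union> Y = K" "X \<inter> Y = {}" "Min K \<in> X"
  shows "Min X = Min K" and "Y \<noteq> {} \<Longrightarrow> Min K < Min Y"
proof -
  show "Min X = Min K" using assms by (intro Min_eqI) auto
  assume "Y \<noteq> {}"
  then have "Min Y \<in> Y" using assms(1,2) by (intro Min_in) auto
  moreover have "Min K \<le> Min Y" using calculation assms(1,2) by auto
  ultimately show "Min K < Min Y" using assms(3,4) by (metis disjoint_iff order_le_less)
qed

lemma with_succ_insert_min_parts: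
  fixes s l :: real
  assumes fK: "finite K'" and ne: "K' \<noteq> {}" and kl: "\<forall>x\<in>K'. k < x"
    and XY: "X \<union> Y = K'" "X \<inter> Y = {}" and mX: "Min K' \<in> X"
  defines "e \<equiv> Min K' - Suc k"
  defines "zy \<equiv> (if Y = {} then 0 else l ^ (Min Y - Min K'))"
  shows "gap_prod s l (with_succ (insert k X))
      = (s + l) * gap_factor s l e * gap_prod s l (with_succ X)"
    and "gap_prod s l (with_succ (insert k Y))
      = (s + l) * (s + l ^ e * zy) * gap_prod s l (with_succ Y)"
    and "Min X = Min K'" and "Min K' - k = Suc e"
    and "Y \<noteq> {} \<Longrightarrow> Min Y - k = Suc e + (Min Y - Min K')"
proof -
  have fX: "finite X" and fY: "finite Y" using fK XY by (auto intro: finite_subset)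
  have kX: "\<forall>x\<in>X. k < x" and kY: "\<forall>x\<in>Y. k < x" using kl XY by auto
  have Xne: "X \<noteq> {}" using mX by auto
  have kK: "k < Min K'" using kl fK ne by simp
  note lt = Min_split(2)[OF fK XY mX]
  show minX: "Min X = Min K'" by (rule Min_split(1)[OF fK XY mX])
  show "gap_prod s l (with_succ (insert k X))
      = (s + l) * gap_factor s l e * gap_prod s l (with_succ X)"
    using gap_prod_with_succ_insert_min[OF fX kX] Xne minX by (simp add: e_def)
  show "Min K' - k = Suc e" using kK by (simp add: e_def)
  show "Y \<noteq> {} \<Longrightarrow> Min Y - k = Suc e + (Min Y - Min K')"
    using lt kK by (simp add: e_def)
  show "gap_prod s l (with_succ (insert k Y))
      = (s + l) * (s + l ^ e * zy) * gap_prod s l (with_succ Y)"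
  proof (cases "Y = {}")
    case True
    then show ?thesis using gap_prod_with_succ_insert_min[OF fY kY] by (simp add: zy_def)
  next
    case False
    have lt': "Min K' < Min Y" using lt[OF False] .
    have ex: "Min Y - Suc k = e + (Min Y - Min K')" using lt' kK by (simp add: e_def)
    have nz: "Min Y - Suc k \<noteq> 0" using lt' kK by simp
    have "gap_factor s l (Min Y - Suc k) = s + l ^ (Min Y - Suc k)"
      unfolding gap_factor_def using nz by (rule if_not_P)
    also have "\<dots> = s + l ^ e * l ^ (Min Y - Min K')" by (simp only: ex power_add)
    finally have "gap_factor s l (Min Y - Suc k) = s + l ^ e * l ^ (Min Y - Min K')" .
    then show ?thesis using gap_prod_with_succ_insert_min[OF fY kY] False by (simp add: zy_def)
  qed
qed

lemma split_terms_insert_min: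
  fixes s l :: real
  assumes fK: "finite K'" and ne: "K' \<noteq> {}" and kl: "\<forall>x\<in>K'. k < x" and K1: "K1 \<subseteq> K'"
  defines "e \<equiv> Min K' - Suc k" and "T \<equiv> split_term s l K' K1" and "Z \<equiv> split_offset l K' K1"
  shows "split_term s l (insert k K') K1 + split_term s l (insert k K') (insert k K1)
       = (s + l) * (gap_factor s l e + s) * T + (s + l) * l ^ e * (T * Z)
     \<and> split_term s l (insert k K') K1 * split_offset l (insert k K') K1
       + split_term s l (insert k K') (insert k K1) * split_offset l (insert k K') (insert k K1)
       = (s + l) * gap_factor s l e * l ^ Suc e * (T * Z)
         + l ^ Suc e * ((s + l) * s * T + (s + l) * l ^ e * (T * Z))"
proof -
  have kK': "k \<notin> K'" using kl by auto
  have kK1: "k \<notin> K1" using kK' K1 by auto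
  have d1: "insert k K' - K1 = insert k (K' - K1)" using kK1 by auto
  have d2: "insert k K' - insert k K1 = K' - K1" using kK' by auto
  have mk: "Min (insert k K') = k" using fK kl by (simp add: Min_insert2 less_imp_le)
  have ztK1: "split_offset l (insert k K') K1 = (if K1 = {} then 0 else l ^ (Min K1 - k))"
    using kK1 mk by (simp add: split_offset_def)
  have ztK2: "split_offset l (insert k K') (insert k K1)
      = (if K' - K1 = {} then 0 else l ^ (Min (K' - K1) - k))"
    using mk d2 by (simp add: split_offset_def)
  show ?thesis
  proof (cases "Min K' \<in> K1")
    case True
    let ?X = K1 and ?Y = "K' - K1"
    have XY: "?X \<union> ?Y = K'" "?X \<inter> ?Y = {}" using K1 by auto
    note F = with_succ_insert_min_parts[OF fK ne kl XY True, folded e_def]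
    have zt': "Z = (if ?Y = {} then 0 else l ^ (Min ?Y - Min K'))"
      using True by (simp add: Z_def split_offset_def)
    have z1: "split_offset l (insert k K') K1 = l ^ Suc e" using ztK1 F(3) F(4) True by auto
    have z2: "split_offset l (insert k K') (insert k K1) = l ^ Suc e * Z"
      using ztK2 F(5) zt' by (simp add: power_add)
    show ?thesis
      unfolding split_term_def d1 d2 z1 z2 F(1) F(2)[of s l, folded zt'] T_def Z_def split_term_def
      by (simp add: algebra_simps)
  next
    case False
    let ?X = "K' - K1" and ?Y = K1
    have XY: "?X \<union> ?Y = K'" "?X \<inter> ?Y = {}" using K1 by auto
    have mX: "Min K' \<in> ?X" using False fK ne by simp
    note F = with_succ_insert_min_parts[OF fK ne kl XY mX, folded e_def]
    have zt': "Z = (if ?Y = {} then 0 else l ^ (Min ?Y - Min K'))"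
      using False by (simp add: Z_def split_offset_def)
    have z1: "split_offset l (insert k K') K1 = l ^ Suc e * Z"
      using ztK1 F(5) zt' by (simp add: power_add)
    have z2: "split_offset l (insert k K') (insert k K1) = l ^ Suc e"
      using ztK2 F(3) F(4) mX by auto
    show ?thesis
      unfolding split_term_def d1 d2 z1 z2 F(1) F(2)[of s l, folded zt'] T_def Z_def split_term_def
      by (simp add: algebra_simps)
  qed
qed

lemma split_sums_insert_min:
  fixes s l :: real
  assumes fK: "finite K'" and ne: "K' \<noteq> {}" and kl: "\<forall>x\<in>K'. k < x"
  defines "e \<equiv> Min K' - Suc k"
  shows "split_sum s l (insert k K')
           = (s + l) * (gap_factor s l e + s) * split_sum s l K'
             + (s + l) * l ^ e * split_sum_offset s l K'"
    and "split_sum_offset s l (insert k K')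
           = (s + l) * gap_factor s l e * l ^ Suc e * split_sum_offset s l K'
             + l ^ Suc e * ((s + l) * s * split_sum s l K'
               + (s + l) * l ^ e * split_sum_offset s l K')"
proof -
  have kK': "k \<notin> K'" using kl by auto
  note terms = split_terms_insert_min[OF fK ne kl, where s = s and l = l, folded e_def]
  show "split_sum s l (insert k K')
      = (s + l) * (gap_factor s l e + s) * split_sum s l K'
        + (s + l) * l ^ e * split_sum_offset s l K'"
    unfolding split_sum_def split_sum_offset_def sum_Pow_insert[OF fK kK']
    using terms by (simp add: sum.distrib sum_distrib_left)
  show "split_sum_offset s l (insert k K')
      = (s + l) * gap_factor s l e * l ^ Suc e * split_sum_offset s l K'
        + l ^ Suc e * ((s + l) * s * split_sum s l K' + (s + l) * l ^ e * split_sum_offset s l K')"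
    unfolding split_sum_def split_sum_offset_def sum_Pow_insert[OF fK kK']
    using terms by (simp add: sum.distrib sum_distrib_left distrib_left mult.assoc)
qed

lemma split_sums_singleton:
  shows "split_sum s l {k} = 2 * (s + l) * s" and "split_sum_offset s l {k} = 0"
proof -
  have P: "Pow {k} = {{}, {k}}" by blast
  have pk: "with_succ {k} = insert k {Suc k}" by (auto simp: with_succ_def)
  have ph: "gap_prod s l (insert k {Suc k}) = (s + l ^ (Min {Suc k} - k)) * gap_prod s l {Suc k}"
    by (rule gap_prod_insert_min) auto
  then have ph': "gap_prod s l (with_succ {k}) = (s + l) * s" using pk by simp
  show "split_sum s l {k} = 2 * (s + l) * s" unfolding split_sum_def split_term_def P
    using ph' by simp
  show "split_sum_offset s l {k} = 0" unfolding split_sum_offset_def split_term_def P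
    by (simp add: split_offset_def)
qed

lemma split_sums_empty: "split_sum s l {} = 1" "split_sum_offset s l {} = 0"
  by (simp_all add: split_sum_def split_sum_offset_def split_term_def split_offset_def)

lemma next_gap_weight_ge:
  fixes s l :: real
  assumes "0 \<le> s" "0 \<le> l"
  shows "s + l \<le> (s + l) * (1 + 2 * s * l)"
  using assms mult_left_mono[of 1 "1 + 2 * s * l" "s + l"] by simp

lemma split_sum_coeff_le:
  fixes s l :: real
  assumes s0: "0 \<le> s" and s1: "s \<le> 1" and l0: "0 \<le> l" and l1: "l \<le> 1/4"
  shows "(s + l) * (gap_factor s l e + s + 2 * s * l ^ Suc e) \<le> 2 * (s + l) * s
      + ((s + l) * (1 + 2 * s * l)) ^ Suc e"
proof -
  define a where "a = s + l"
  define L where "L = (s + l) * (1 + 2 * s * l)"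
  have a0: "0 \<le> a" and La: "a \<le> L" and lL: "l \<le> L" and L0: "0 \<le> L"
    using next_gap_weight_ge[OF s0 l0] s0 l0 by (auto simp: a_def L_def)
  show ?thesis
  proof (cases e)
    case 0
    have "a * (1 + s + 2 * s * l) \<le> 2 * a * s + a * (1 + 2 * s * l)"
    proof -
      have "a * (1 + s + 2 * s * l) = 2 * a * s + a * (1 + 2 * s * l) - a * s"
        by (simp add: algebra_simps)
      moreover have "0 \<le> a * s" using a0 s0 by simp
      ultimately show ?thesis by linarith
    qed
    moreover have "gap_factor s l e = 1" using 0 by (simp add: gap_factor_def)
    ultimately have "a * (gap_factor s l e + s + 2 * s * l ^ Suc e) \<le> 2 * a * s + L ^ Suc e"
      using 0 by (simp add: L_def a_def)
    then show ?thesis by (simp add: a_def L_def)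
  next
    case (Suc e')
    have Q: "gap_factor s l e = s + l ^ e" using Suc by (simp add: gap_factor_def)
    have "a * (gap_factor s l e + s + 2 * s * l ^ Suc e) = 2 * a * s + L * l ^ e"
      unfolding Q by (simp add: a_def L_def algebra_simps)
    also have "L * l ^ e \<le> L * L ^ e" using L0 l0 lL by (intro mult_left_mono power_mono) auto
    also have "L * L ^ e = L ^ Suc e" by simp
    finally show ?thesis by (simp add: a_def L_def)
  qed
qed

lemma split_sum_offset_coeff_le:
  fixes s l :: real
  assumes s0: "0 \<le> s" and s1: "s \<le> 1" and l0: "0 \<le> l" and l1: "l \<le> 1/4"
  shows "(s + l) * (l ^ e + 2 * l ^ Suc e * gap_factor s l e + 2 * l ^ Suc e * l ^ e)
         \<le> 2 * (2 * (s + l) * s + ((s + l) * (1 + 2 * s * l)) ^ Suc e)"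
proof -
  define a where "a = s + l"
  define L where "L = (s + l) * (1 + 2 * s * l)"
  have a0: "0 \<le> a" and La: "a \<le> L" and lL: "l \<le> L" and L0: "0 \<le> L"
    using next_gap_weight_ge[OF s0 l0] s0 l0 by (auto simp: a_def L_def)
  have sl: "s * l \<le> 1 * (1/4)" using s0 s1 l0 l1 by (intro mult_mono) auto
  show ?thesis
  proof (cases e)
    case 0
    have sl0: "0 \<le> s * l" using s0 l0 by simp
    have "1 + 4 * l \<le> 2 + 4 * s + 4 * (s * l)" using sl0 s0 l1 by linarith
    then have "a * (1 + 4 * l) \<le> a * (2 + 4 * s + 4 * (s * l))"
      using a0 by (rule mult_left_mono)
    then show ?thesis using 0 by (simp add: gap_factor_def a_def L_def algebra_simps)
  next
    case (Suc e')
    have Q: "gap_factor s l e = s + l ^ e" using Suc by (simp add: gap_factor_def)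
    have ll: "l ^ Suc e \<le> 1/16"
    proof -
      have "l ^ Suc e \<le> l ^ 2" using l0 l1 Suc by (intro power_decreasing) auto
      also have "l ^ 2 \<le> (1/4) ^ 2" using l0 l1 by (intro power_mono) auto
      finally show ?thesis by (simp add: power2_eq_square)
    qed
    have inner: "1 + 2 * l * s + 4 * l ^ Suc e \<le> 2" using sl ll by (simp add: algebra_simps)
    have "a * (l ^ e + 2 * l ^ Suc e * gap_factor s l e + 2 * l ^ Suc e * l ^ e)
        = (a * l ^ e) * (1 + 2 * l * s + 4 * l ^ Suc e)"
      unfolding Q by (simp add: algebra_simps)
    also have "\<dots> \<le> (a * l ^ e) * 2" using inner a0 l0 by (intro mult_left_mono) auto
    also have "a * l ^ e \<le> L * L ^ e" using a0 La l0 lL by (intro mult_mono power_mono) auto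
    then have "(a * l ^ e) * 2 \<le> 2 * L ^ Suc e" by simp
    also have "2 * L ^ Suc e \<le> 2 * (2 * a * s + L ^ Suc e)" using a0 s0 by simp
    finally show ?thesis by (simp add: a_def L_def)
  qed
qed

lemma split_sums_le_gap_prod:
  fixes s l :: real and K :: "nat set"
  assumes fK: "finite K" and s0: "0 \<le> s" and s1: "s \<le> 1" and l0: "0 \<le> l" and l1: "l \<le> 1/4"
  shows "split_sum s l K + 2 * split_sum_offset s l K
      \<le> gap_prod (2 * (s + l) * s) ((s + l) * (1 + 2 * s * l)) K"
  using fK
proof (induction K rule: finite_linorder_min_induct)
  case empty
  then show ?case by (simp add: split_sums_empty)
next
  case (insert k K')
  show ?case
  proof (cases "K' = {}")
    case True
    then show ?thesis by (simp add: split_sums_singleton)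
  next
    case False
    define e where "e = Min K' - Suc k"
    define a where "a = s + l"
    define q where "q = 2 * (s + l) * s + ((s + l) * (1 + 2 * s * l)) ^ Suc e"
    have mK: "Min K' \<in> K'" using insert.hyps(1) False by simp
    have kK: "k < Min K'" using insert.hyps(2) mK by blast
    have de: "Min K' - k = Suc e" using kK by (simp add: e_def)
    note R = split_sums_insert_min[OF insert.hyps(1) False insert.hyps(2),
        where s = s and l = l, folded e_def]
    have A0: "0 \<le> split_sum s l K'" and Z0: "0 \<le> split_sum_offset s l K'" using s0 l0
      by (auto intro: split_sum_nonneg split_sum_offset_nonneg)
    have cA: "a * (gap_factor s l e + s + 2 * s * l ^ Suc e) \<le> q"
      using split_sum_coeff_le[OF s0 s1 l0 l1, of e] by (simp add: a_def q_def)
    have cZ: "a * (l ^ e + 2 * l ^ Suc e * gap_factor s l e + 2 * l ^ Suc e * l ^ e) \<le> 2 * q"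
      using split_sum_offset_coeff_le[OF s0 s1 l0 l1, of e] by (simp add: a_def q_def)
    have "split_sum s l (insert k K') + 2 * split_sum_offset s l (insert k K')
        = a * (gap_factor s l e + s + 2 * s * l ^ Suc e) * split_sum s l K'
          + a * (l ^ e + 2 * l ^ Suc e * gap_factor s l e + 2 * l ^ Suc e * l ^ e)
            * split_sum_offset s l K'"
      unfolding R a_def by (simp add: algebra_simps)
    also have "\<dots> \<le> q * split_sum s l K' + (2 * q) * split_sum_offset s l K'"
      using cA cZ A0 Z0 by (intro add_mono mult_right_mono) auto
    also have "\<dots> = q * (split_sum s l K' + 2 * split_sum_offset s l K')"
      by (simp add: algebra_simps)
    also have "\<dots> \<le> q * gap_prod (2 * (s + l) * s) ((s + l) * (1 + 2 * s * l)) K'"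
    proof (rule mult_left_mono[OF insert.IH])
      show "0 \<le> q" unfolding q_def using s0 l0
        by (intro add_nonneg_nonneg mult_nonneg_nonneg zero_le_power) auto
    qed
    also have "\<dots> = gap_prod (2 * (s + l) * s) ((s + l) * (1 + 2 * s * l)) (insert k K')"
      using gap_prod_insert_min[OF insert.hyps(1) False insert.hyps(2)] de by (simp add: q_def)
    finally show ?thesis .
  qed
qed

text \<open>The parameters of the gap product after m rounds, starting from independent leaves won with
  probability e. For e \<le> 1/8 they stay in the triangle l + 11/5 s \<le> 1/5, where s contracts by
  the factor 2 (s + l) \<le> 2/5.\<close>

fun chooser_bound :: "real \<Rightarrow> nat \<Rightarrow> real \<times> real" where
  "chooser_bound e 0 = (e, 0)"
| "chooser_bound e (Suc m) =
     (let s = fst (chooser_bound e m); l = snd (chooser_bound e m)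
      in (2 * (s + l) * s, (s + l) * (1 + 2 * s * l)))"

lemma chooser_bound_invariant:
  assumes e0: "0 \<le> e" and e1: "e \<le> 1/8" and m: "1 \<le> m"
  shows "0 \<le> fst (chooser_bound e m) \<and> 0 \<le> snd (chooser_bound e m)
      \<and> snd (chooser_bound e m) + 11/5 * fst (chooser_bound e m) \<le> 1/5"
  using m
proof (induction m rule: dec_induct)
  case base
  have "e * e \<le> (1/8) * (1/8)" using e0 e1 by (intro mult_mono) auto
  then show ?case using e0 e1 by (simp add: algebra_simps)
next
  case (step m)
  define s where "s = fst (chooser_bound e m)"
  define l where "l = snd (chooser_bound e m)"
  have s0: "0 \<le> s" and l0: "0 \<le> l" and inv: "l + 11/5 * s \<le> 1/5" using step.IH
    by (auto simp: s_def l_def)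
  have sl: "s + l \<le> 1/5" using inv s0 by linarith
  have l15: "l \<le> 1/5" using inv s0 by linarith
  have a: "(s + l) * (2 * l + 22/5) \<le> (1/5) * (24/5)"
    using sl l15 s0 l0 by (intro mult_mono) auto
  have key: "s * ((s + l) * (2 * l + 22/5)) \<le> s * (6/5)"
    using a s0 by (intro mult_left_mono) auto
  have "(s + l) * (1 + 2 * s * l) + 11/5 * (2 * (s + l) * s)
      = s + l + s * ((s + l) * (2 * l + 22/5))"
    by (simp add: algebra_simps)
  also have "\<dots> \<le> l + 11/5 * s" using key by simp
  finally have "(s + l) * (1 + 2 * s * l) + 11/5 * (2 * (s + l) * s) \<le> 1/5" using inv by linarith
  moreover have "0 \<le> 2 * (s + l) * s" "0 \<le> (s + l) * (1 + 2 * s * l)" using s0 l0 by auto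
  ultimately show ?case by (simp add: Let_def s_def[symmetric] l_def[symmetric])
qed

lemma chooser_bound_range:
  assumes e0: "0 \<le> e" and e1: "e \<le> 1/8"
  shows "0 \<le> fst (chooser_bound e m) \<and> fst (chooser_bound e m) \<le> 1
      \<and> 0 \<le> snd (chooser_bound e m) \<and> snd (chooser_bound e m) \<le> 1/4"
proof (cases m)
  case 0
  then show ?thesis using e0 e1 by simp
next
  case (Suc k)
  then have "1 \<le> m" by simp
  from chooser_bound_invariant[OF e0 e1 this] show ?thesis by auto
qed

lemma chooser_bound_decay:
  assumes e0: "0 \<le> e" and e1: "e \<le> 1/8" and m: "1 \<le> m"
  shows "fst (chooser_bound e (Suc m)) \<le> 2/5 * fst (chooser_bound e m)"
proof -
  define s where "s = fst (chooser_bound e m)"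
  define l where "l = snd (chooser_bound e m)"
  have s0: "0 \<le> s" and l0: "0 \<le> l" and inv: "l + 11/5 * s \<le> 1/5"
    using chooser_bound_invariant[OF e0 e1 m] by (auto simp: s_def l_def)
  have sl0: "s + l \<le> 1/5" using inv s0 by linarith
  have sl: "2 * (s + l) \<le> 2/5" using sl0 by simp
  have "2 * (s + l) * s \<le> 2/5 * s" using sl s0 by (intro mult_right_mono) auto
  then show ?thesis by (simp add: Let_def s_def[symmetric] l_def[symmetric])
qed

lemma chooser_bound_tendsto_0:
  assumes e0: "0 \<le> e" and e1: "e \<le> 1/8"
  shows "(\<lambda>m. fst (chooser_bound e m)) \<longlonglongrightarrow> 0"
proof -
  have b: "fst (chooser_bound e (Suc k)) \<le> (2/5) ^ k * fst (chooser_bound e 1)" for k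
  proof (induction k)
    case 0
    then show ?case by (simp del: chooser_bound.simps)
  next
    case (Suc k)
    have "fst (chooser_bound e (Suc (Suc k))) \<le> 2/5 * fst (chooser_bound e (Suc k))"
      by (rule chooser_bound_decay[OF e0 e1]) simp
    also have "\<dots> \<le> 2/5 * ((2/5) ^ k * fst (chooser_bound e 1))" using Suc.IH
      by (simp del: chooser_bound.simps)
    finally show ?case by (simp only: power_Suc mult.assoc)
  qed
  have t: "(\<lambda>k. (2/5) ^ k * fst (chooser_bound e 1)) \<longlonglongrightarrow> 0"
    by (intro tendsto_mult_left_zero LIMSEQ_power_zero) auto
  have "(\<lambda>k. fst (chooser_bound e (Suc k))) \<longlonglongrightarrow> 0"
  proof (rule tendsto_sandwich[OF _ _ tendsto_const t])
    show "\<forall>\<^sub>F k in sequentially. 0 \<le> fst (chooser_bound e (Suc k))"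
      using chooser_bound_range[OF e0 e1] by (simp del: chooser_bound.simps)
    show "\<forall>\<^sub>F k in sequentially.
        fst (chooser_bound e (Suc k)) \<le> (2/5) ^ k * fst (chooser_bound e 1)"
      using b by (simp del: chooser_bound.simps)
  qed
  then show ?thesis by (rule LIMSEQ_imp_Suc)
qed

lemma gap_prod_zero_gap_weight: "finite K \<Longrightarrow> gap_prod s 0 K = s ^ card K"
proof (induction K rule: finite_linorder_min_induct)
  case (insert k K)
  show ?case
  proof (cases "K = {}")
    case False
    then have "k < Min K" using insert.hyps by simp
    then show ?thesis
      using gap_prod_insert_min[OF insert.hyps(1) False insert.hyps(2), of s 0] insert
      by (auto simp: card_insert_if)
  qed simp
qed simp

section \<open>A game in which one player chooses the branch\<close>

text \<open>In each round the chooser extends the node v of the binary tree by a branch x, after which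
  the opponent decides whether the counter c is incremented; L describes the winning leaves.\<close>

fun chooser_wins :: "(nat list \<Rightarrow> nat \<Rightarrow> 'a set \<Rightarrow> bool) \<Rightarrow> nat \<Rightarrow> nat list \<Rightarrow> nat \<Rightarrow> 'a set \<Rightarrow> bool" where
  "chooser_wins L 0 v c B = L v c B"
| "chooser_wins L (Suc m) v c B =
     (\<exists>x\<in>{1,2}. chooser_wins L m (v @ [x]) c B \<and> chooser_wins L m (v @ [x]) (Suc c) B)"

lemma chooser_wins_determined_by:
  assumes "\<And>v c. determined_by (L v c) (region v)" and "\<And>v x. region (v @ [x]) \<subseteq> region v"
  shows "determined_by (chooser_wins L m v c) (region v)"
proof (induction m arbitrary: v c)
  case 0
  have "chooser_wins L 0 v c = L v c" by (rule ext) simp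
  then show ?case using assms(1) by simp
next
  case (Suc m)
  have "determined_by (chooser_wins L m (v @ [x]) c') (region v)" for x c'
    using Suc.IH assms(2) by (rule determined_by_mono)
  then have "determined_by
      (\<lambda>B. \<exists>x\<in>{1,2}. chooser_wins L m (v @ [x]) c B \<and> chooser_wins L m (v @ [x]) (Suc c) B)
      (region v)"
    by (intro determined_by_Bex determined_by_conj)
  then show ?case by (simp only: chooser_wins.simps)
qed

lemma chooser_wins_Suc_split:
  assumes "\<forall>c\<in>K. chooser_wins L (Suc m) v c B"
  shows "\<exists>K1\<in>Pow K. (\<forall>c\<in>with_succ K1. chooser_wins L m (v @ [1]) c B)
                 \<and> (\<forall>c\<in>with_succ (K - K1). chooser_wins L m (v @ [2]) c B)"
proof (intro bexI conjI)
  let ?K1 = "{c\<in>K. chooser_wins L m (v @ [1]) c B \<and> chooser_wins L m (v @ [1]) (Suc c) B}"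
  show "?K1 \<in> Pow K" by blast
  show "\<forall>c\<in>with_succ ?K1. chooser_wins L m (v @ [1]) c B" by (auto simp: with_succ_def)
  show "\<forall>c\<in>with_succ (K - ?K1). chooser_wins L m (v @ [2]) c B"
    using assms by (auto simp: with_succ_def)
qed

lemma with_succ_bounded:
  assumes "\<forall>c\<in>K. c + Suc m \<le> M" "K1 \<subseteq> K"
  shows "\<forall>c\<in>with_succ K1. c + m \<le> M"
  using assms unfolding with_succ_def by fastforce

lemma chooser_wins_prob_le:
  fixes region :: "nat list \<Rightarrow> 'a set"
  assumes U: "finite U" and p: "0 \<le> p" "p \<le> 1" and e: "0 \<le> e" "e \<le> 1/8"
    and disjoint: "\<And>v. region (v @ [1]) \<inter> region (v @ [2]) = {}"
    and nested: "\<And>v x. region (v @ [x]) \<subseteq> region v"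
    and leaf_determined: "\<And>v c. determined_by (L v c) (region v)"
    and leaf_prob: "\<And>v K. length v = N \<Longrightarrow> set v \<subseteq> {1,2} \<Longrightarrow> finite K \<Longrightarrow> \<forall>c\<in>K. c \<le> M
                 \<Longrightarrow> rand_prob p U (\<lambda>B. \<forall>c\<in>K. L v c B) \<le> e ^ card K"
    and "length v + m = N" "set v \<subseteq> {1,2}" "finite K" "\<forall>c\<in>K. c + m \<le> M"
  shows "rand_prob p U (\<lambda>B. \<forall>c\<in>K. chooser_wins L m v c B)
         \<le> gap_prod (fst (chooser_bound e m)) (snd (chooser_bound e m)) K"
  using assms(10-)
proof (induction m arbitrary: v K)
  case 0
  then show ?case using leaf_prob by (simp add: gap_prod_zero_gap_weight)
next
  case (Suc m)
  define s where "s = fst (chooser_bound e m)"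
  define l where "l = snd (chooser_bound e m)"
  have sl: "0 \<le> s" "s \<le> 1" "0 \<le> l" "l \<le> 1/4" using chooser_bound_range[OF e, of m]
    by (auto simp: s_def l_def)
  let ?W = "\<lambda>x K B. \<forall>c\<in>with_succ K. chooser_wins L m (v @ [x]) c B"
  have branch: "rand_prob p U (?W x K') \<le> gap_prod s l (with_succ K')"
    if "x \<in> {1,2}" "K' \<subseteq> K" for x K'
  proof -
    have "finite K'" using that(2) Suc.prems(3) by (rule finite_subset)
    then show ?thesis
      using Suc.IH[of "v @ [x]" "with_succ K'"] Suc.prems that with_succ_bounded[of K m M K']
      by (simp add: s_def l_def)
  qed
  have "rand_prob p U (\<lambda>B. \<forall>c\<in>K. chooser_wins L (Suc m) v c B)
      \<le> rand_prob p U (\<lambda>B. \<exists>K1\<in>Pow K. ?W 1 K1 B \<and> ?W 2 (K - K1) B)"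
    by (intro rand_prob_mono U p chooser_wins_Suc_split)
  also have "\<dots> \<le> (\<Sum>K1\<in>Pow K. rand_prob p U (\<lambda>B. ?W 1 K1 B \<and> ?W 2 (K - K1) B))"
    using Suc.prems(3) by (intro rand_prob_Bex_le U p) simp
  also have "\<dots> = (\<Sum>K1\<in>Pow K. rand_prob p U (?W 1 K1) * rand_prob p U (?W 2 (K - K1)))"
    using chooser_wins_determined_by[OF leaf_determined nested] disjoint
    by (intro sum.cong refl determined_by_Ball
        rand_prob_indep[OF U, where S = "region (v @ [1])" and T = "region (v @ [2])"]) blast+
  also have "\<dots> \<le> split_sum s l K"
    unfolding split_sum_def split_term_def using branch sl
    by (intro sum_mono mult_mono rand_prob_nonneg p gap_prod_nonneg) auto
  also have "\<dots> \<le> gap_prod (fst (chooser_bound e (Suc m))) (snd (chooser_bound e (Suc m))) K"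
    using split_sums_le_gap_prod[OF Suc.prems(3) sl] split_sum_offset_nonneg[of s l K] sl
    by (simp add: Let_def s_def l_def)
  finally show ?case .
qed

section \<open>Estimates for the two games\<close>

definition Ab_subtree :: "nat list \<Rightarrow> (nat list \<times> nat) set" where
  "Ab_subtree v = {(a, k). \<exists>w. a = v @ w}"

definition alice_wins_Ab_leaf :: "nat list \<Rightarrow> nat \<Rightarrow> (nat list \<times> nat) set \<Rightarrow> bool" where
  "alice_wins_Ab_leaf a c B \<longleftrightarrow> (a, c) \<notin> B"

lemma not_bob_wins_Ab_from_iff:
  "\<not> bob_wins_Ab_from B m a c \<longleftrightarrow> chooser_wins alice_wins_Ab_leaf m a c B"
  by (induction m arbitrary: a c) (auto simp: alice_wins_Ab_leaf_def)

lemma P_Ab_ge_chooser_bound: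
  assumes "7/8 \<le> p" "p \<le> 1"
  shows "1 - fst (chooser_bound (1 - p) n) \<le> P_Ab n p"
proof -
  let ?U = "outcomes_Ab n"
  have U: "finite ?U" by (rule finite_outcomes_Ab)
  have leaf_prob: "rand_prob p ?U (\<lambda>B. \<forall>c\<in>K. alice_wins_Ab_leaf a c B) \<le> (1 - p) ^ card K"
    if "length a = n" "set a \<subseteq> {1,2}" "\<forall>c\<in>K. c \<le> n" for a K
  proof -
    have "Pair a ` K \<subseteq> ?U" using that by (auto simp: outcomes_Ab_def move_seqs_def)
    then have "rand_prob p ?U (\<lambda>B. \<forall>x\<in>Pair a ` K. x \<notin> B) = (1 - p) ^ card (Pair a ` K)"
      by (rule rand_prob_avoid[OF U])
    then show ?thesis by (simp add: alice_wins_Ab_leaf_def card_image inj_on_def)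
  qed
  have "rand_prob p ?U (\<lambda>B. \<forall>c\<in>{0}. chooser_wins alice_wins_Ab_leaf n [] c B)
      \<le> gap_prod (fst (chooser_bound (1 - p) n)) (snd (chooser_bound (1 - p) n)) {0}"
    using assms leaf_prob
    by (intro chooser_wins_prob_le[OF U, where region = Ab_subtree and N = n and M = n])
      (auto simp: Ab_subtree_def determined_by_def alice_wins_Ab_leaf_def)
  then have "rand_prob p ?U (\<lambda>B. \<not> bob_wins_Ab_from B n [] 0) \<le> fst (chooser_bound (1 - p) n)"
    by (simp add: not_bob_wins_Ab_from_iff)
  then show ?thesis by (simp add: P_Ab_eq_rand_prob rand_prob_not[OF U])
qed

text \<open>Delaying the rounds of aB by half a move, Bob becomes the chooser: he picks his move
  before Alice decides whether her counter grows.\<close>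

definition aB_subtree :: "nat list \<Rightarrow> (nat \<times> nat list) set" where
  "aB_subtree v = {(k, b). \<exists>w. b = v @ w}"

definition bob_wins_aB_leaf :: "nat list \<Rightarrow> nat \<Rightarrow> (nat \<times> nat list) set \<Rightarrow> bool" where
  "bob_wins_aB_leaf b c B \<longleftrightarrow> (\<exists>y\<in>{1,2}. (c, b @ [y]) \<in> B)"

lemma bob_wins_aB_from_snoc_iff:
  "(\<exists>y\<in>{1,2}. bob_wins_aB_from B m c (b @ [y])) \<longleftrightarrow> chooser_wins bob_wins_aB_leaf m b c B"
proof (induction m arbitrary: c b)
  case (Suc m)
  have "chooser_wins bob_wins_aB_leaf (Suc m) b c B
      \<longleftrightarrow> (\<exists>y\<in>{1,2}. (\<exists>y'\<in>{1,2}. bob_wins_aB_from B m c ((b @ [y]) @ [y']))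
                   \<and> (\<exists>y'\<in>{1,2}. bob_wins_aB_from B m (Suc c) ((b @ [y]) @ [y'])))"
    by (simp only: chooser_wins.simps Suc.IH[symmetric])
  then show ?case by auto
qed (simp add: bob_wins_aB_leaf_def)

lemma aB_leaf_prob_range:
  fixes p :: real
  assumes "0 \<le> p" "p \<le> 1/16"
  shows "0 \<le> 1 - (1 - p)^2 \<and> 1 - (1 - p)^2 \<le> 1/8"
proof -
  have "p * (2 - p) \<le> p * 2" using assms by (intro mult_left_mono) auto
  moreover have "1 - (1 - p)^2 = p * (2 - p)" by (simp add: power2_eq_square algebra_simps)
  ultimately show ?thesis using assms by auto
qed

lemma P_aB_Suc_le_chooser_bound:
  assumes "0 \<le> p" "p \<le> 1/16"
  shows "P_aB (Suc n) p \<le> fst (chooser_bound (1 - (1 - p)^2) n)"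
proof -
  let ?U = "outcomes_aB (Suc n)" and ?e = "1 - (1 - p)^2"
  have U: "finite ?U" by (rule finite_outcomes_aB)
  have e: "0 \<le> ?e" "?e \<le> 1/8" using aB_leaf_prob_range[OF assms] by auto
  have leaf_prob: "rand_prob p ?U (\<lambda>B. \<forall>c\<in>K. bob_wins_aB_leaf b c B) \<le> ?e ^ card K"
    if "length b = n" "set b \<subseteq> {1,2}" "finite K" "\<forall>c\<in>K. c \<le> Suc n" for b K
  proof -
    let ?S = "\<lambda>c. {(c, b @ [1]), (c, b @ [2])}"
    have leaf: "rand_prob p ?U (bob_wins_aB_leaf b c) = ?e" if "c \<in> K" for c
    proof -
      have sub: "?S c \<subseteq> ?U" using that \<open>length b = n\<close> \<open>set b \<subseteq> {1,2}\<close> \<open>\<forall>c\<in>K. c \<le> Suc n\<close>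
        by (auto simp: outcomes_aB_def move_seqs_def)
      have "bob_wins_aB_leaf b c = (\<lambda>B. \<exists>x\<in>?S c. x \<in> B)"
        by (auto simp: fun_eq_iff bob_wins_aB_leaf_def)
      then show ?thesis using rand_prob_hit[OF U sub, of p] by (simp add: power2_eq_square)
    qed
    have "rand_prob p ?U (\<lambda>B. \<forall>c\<in>K. bob_wins_aB_leaf b c B)
        = (\<Prod>c\<in>K. rand_prob p ?U (bob_wins_aB_leaf b c))"
      by (rule rand_prob_Ball_indep[OF U \<open>finite K\<close>, where S = ?S])
        (auto simp: determined_by_def bob_wins_aB_leaf_def)
    then show ?thesis by (simp add: leaf)
  qed
  have "P_aB (Suc n) p \<le> rand_prob p ?U (\<lambda>B. \<forall>c\<in>{0}. chooser_wins bob_wins_aB_leaf n [] c B)"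
    unfolding P_aB_eq_rand_prob using assms
    by (intro rand_prob_mono U) (auto simp flip: bob_wins_aB_from_snoc_iff)
  also have "\<dots> \<le> gap_prod (fst (chooser_bound ?e n)) (snd (chooser_bound ?e n)) {0}"
    using assms e leaf_prob
    by (intro chooser_wins_prob_le[OF U, where region = aB_subtree and N = n and M = "Suc n"])
      (auto simp: aB_subtree_def determined_by_def bob_wins_aB_leaf_def)
  finally show ?thesis by simp
qed

lemma bob_wins_Ab_from_along:
  assumes "bob_wins_Ab_from B m v c" "length w = m" "set w \<subseteq> {1,2}"
  shows "\<exists>k\<le>m. (v @ w, c + k) \<in> B"
  using assms
proof (induction w arbitrary: m v c)
  case (Cons x w)
  then obtain m' where m: "m = Suc m'" by (cases m) auto
  then consider "bob_wins_Ab_from B m' (v @ [x]) (Suc c)" | "bob_wins_Ab_from B m' (v @ [x]) c"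
    using Cons.prems by auto
  then show ?case
  proof cases
    case 1
    with Cons.IH[of m' "v @ [x]" "Suc c"] Cons.prems m obtain k
      where "k \<le> m'" "(v @ x # w, Suc c + k) \<in> B"
      by auto
    then show ?thesis using m by (intro exI[of _ "Suc k"]) auto
  next
    case 2
    with Cons.IH[of m' "v @ [x]" c] Cons.prems m show ?thesis by (auto intro: le_SucI)
  qed
qed simp

lemma P_Ab_le_escape:
  assumes "0 \<le> p" "p \<le> 1"
  shows "P_Ab n p \<le> (1 - (1 - p) ^ Suc n) ^ (2 ^ n)"
proof -
  let ?U = "outcomes_Ab n" and ?S = "\<lambda>a. Pair a ` {..n}"
  have U: "finite ?U" by (rule finite_outcomes_Ab)
  have card: "card (move_seqs n) = 2 ^ n"
    using card_lists_length_eq[of "{1, 2 :: nat}" n]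
    by (simp add: move_seqs_def conj_commute numeral_2_eq_2)
  have S: "?S a \<subseteq> ?U" "card (?S a) = Suc n" if "a \<in> move_seqs n" for a
    using that by (auto simp: outcomes_Ab_def card_image inj_on_def)
  have "\<exists>x\<in>?S a. x \<in> B" if "bob_wins_Ab_from B n [] 0" "a \<in> move_seqs n" for B a
    using bob_wins_Ab_from_along[OF that(1), of a] that(2) by (auto simp: move_seqs_def)
  then have "P_Ab n p \<le> rand_prob p ?U (\<lambda>B. \<forall>a\<in>move_seqs n. \<exists>x\<in>?S a. x \<in> B)"
    unfolding P_Ab_eq_rand_prob using assms by (intro rand_prob_mono U) auto
  also have "\<dots> = (\<Prod>a\<in>move_seqs n. rand_prob p ?U (\<lambda>B. \<exists>x\<in>?S a. x \<in> B))"
    by (intro rand_prob_Ball_indep[OF U finite_move_seqs, where S = ?S])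
      (auto simp: determined_by_def)
  also have "\<dots> = (\<Prod>a\<in>move_seqs n. 1 - (1 - p) ^ Suc n)"
    using rand_prob_hit[OF U S(1)] S(2) by (intro prod.cong) auto
  finally show ?thesis by (simp add: card)
qed

fun aB_lower :: "real \<Rightarrow> nat \<Rightarrow> real" where
  "aB_lower p 0 = p"
| "aB_lower p (Suc m) = (1 - (1 - aB_lower p m)^2)^2"

lemma aB_lower_range: "0 \<le> p \<Longrightarrow> p \<le> 1 \<Longrightarrow> 0 \<le> aB_lower p m \<and> aB_lower p m \<le> 1"
  by (induction m) (auto simp: power_le_one)

lemma bob_wins_aB_from_mono: "B \<subseteq> B' \<Longrightarrow> bob_wins_aB_from B m c b \<Longrightarrow> bob_wins_aB_from B' m c b"
proof (induction m arbitrary: c b)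
  case (Suc m)
  then show ?case by (simp only: bob_wins_aB_from.simps) blast
qed auto

lemma bob_wins_aB_from_determined_by: "determined_by (\<lambda>B. bob_wins_aB_from B m c b) (aB_subtree b)"
proof (induction m arbitrary: c b)
  case 0
  show ?case by (auto simp: determined_by_def aB_subtree_def)
next
  case (Suc m)
  have "determined_by (\<lambda>B. bob_wins_aB_from B m c' (b @ [y])) (aB_subtree b)" for y c'
    using Suc.IH by (rule determined_by_mono) (auto simp: aB_subtree_def)
  then have "determined_by
      (\<lambda>B. \<forall>x\<in>{1::nat,2}. \<exists>y\<in>{1,2}. bob_wins_aB_from B m (if x = 1 then Suc c else c) (b @ [y]))
      (aB_subtree b)"
    by (intro determined_by_Ball determined_by_Bex)
  then show ?case by (simp only: bob_wins_aB_from.simps)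
qed

lemma aB_lower_le_rand_prob:
  assumes p: "0 \<le> p" "p \<le> 1" and "length b + m = n" "set b \<subseteq> {1,2}" "c + m \<le> n"
  shows "aB_lower p m \<le> rand_prob p (outcomes_aB n) (\<lambda>B. bob_wins_aB_from B m c b)"
  using assms(3-)
proof (induction m arbitrary: c b)
  case 0
  then have "(c, b) \<in> outcomes_aB n" by (auto simp: outcomes_aB_def move_seqs_def)
  then show ?case by (simp add: rand_prob_member finite_outcomes_aB)
next
  case (Suc m)
  let ?U = "outcomes_aB n" and ?h = "aB_lower p m"
  let ?Y = "\<lambda>c' B. bob_wins_aB_from B m c' (b @ [1]) \<or> bob_wins_aB_from B m c' (b @ [2])"
  have U: "finite ?U" by (rule finite_outcomes_aB)
  have Y: "1 - (1 - ?h)^2 \<le> rand_prob p ?U (?Y c')" if "c' + m \<le> n" for c'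
    using Suc.IH[of "b @ [1]" c'] Suc.IH[of "b @ [2]" c'] Suc.prems that
    by (intro bob_wins_aB_from_determined_by rand_prob_disj_indep_ge[OF U p,
          where S = "aB_subtree (b @ [1])" and T = "aB_subtree (b @ [2])"])
      (auto simp: aB_subtree_def)
  have mono_Y: "mono (?Y c')" for c' by (intro monoI le_boolI) (meson bob_wins_aB_from_mono)
  have "0 \<le> 1 - (1 - ?h)^2" using aB_lower_range[OF p] by (simp add: power_le_one)
  then have "aB_lower p (Suc m) \<le> rand_prob p ?U (?Y (Suc c)) * rand_prob p ?U (?Y c)"
    using Y[of "Suc c"] Y[of c] Suc.prems(3) by (simp add: power2_eq_square mult_mono)
  also have "\<dots> \<le> rand_prob p ?U (\<lambda>B. ?Y (Suc c) B \<and> ?Y c B)"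
    by (rule harris_inequality[OF U p mono_Y mono_Y])
  also have "\<dots> = rand_prob p ?U (\<lambda>B. bob_wins_aB_from B (Suc m) c b)" by (rule rand_prob_cong) auto
  finally show ?case .
qed

lemma aB_lower_le_P_aB: "0 \<le> p \<Longrightarrow> p \<le> 1 \<Longrightarrow> aB_lower p n \<le> P_aB n p"
  using aB_lower_le_rand_prob[of p "[]" n n 0] by (simp add: P_aB_eq_rand_prob)

text \<open>With t = 1 - aB_lower p m the recursion reads t \<mapsto> t (2t - t^3), and the factor 2t - t^3
  is below 1 exactly for t below the inverse golden ratio (\<surd>5 - 1)/2.\<close>

lemma inverse_golden_contraction:
  fixes t u :: real
  assumes "0 \<le> u" "u \<le> t" "t < (sqrt 5 - 1) / 2"
  shows "0 \<le> 2 * u - u^3" "2 * u - u^3 \<le> 2 * t - t^3" "2 * t - t^3 < 1"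
proof -
  have "2 < sqrt 5" by (rule real_less_rsqrt) simp
  moreover have "sqrt 5 < 9/4" by (rule real_less_lsqrt) (simp_all add: power2_eq_square)
  ultimately have sqrt5: "2 < sqrt 5" "sqrt 5 < 9/4" "sqrt 5 * sqrt 5 = 5" by simp_all
  define r where "r = (sqrt 5 - 1) / 2"
  have r: "r * r + r = 1" "r < 5/8" using sqrt5 by (auto simp: r_def field_simps)
  have t: "0 \<le> t" "t < 5/8" "t < r" using assms r by (auto simp: r_def)
  have "u * u \<le> 1" using assms t by (intro mult_le_one) auto
  then have "u * u * u \<le> 1 * u" using assms(1) by (rule mult_right_mono)
  then have "u^3 \<le> u" by (simp add: power3_eq_cube)
  then show "0 \<le> 2 * u - u^3" using assms(1) by simp
  have "u * u \<le> t * t" "u * t \<le> t * t" using assms by (auto intro: mult_mono)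
  then have "u * u + u * t + t * t \<le> 3 * (t * t)" by linarith
  also have "\<dots> \<le> 3 * ((5/8) * (5/8))" using t by (intro mult_left_mono mult_mono) auto
  finally have "0 \<le> (t - u) * (2 - (u * u + u * t + t * t))" using assms
    by (intro mult_nonneg_nonneg) auto
  then show "2 * u - u^3 \<le> 2 * t - t^3" by (simp add: power3_eq_cube algebra_simps)
  have "t * t < r * r" using t by (intro mult_strict_mono) auto
  then have "0 < (1 - t) * (1 - (t * t + t))" using r t by (intro mult_pos_pos) auto
  then show "2 * t - t^3 < 1" by (simp add: power3_eq_cube algebra_simps)
qed

lemma aB_lower_tendsto_1:
  assumes "(3 - sqrt 5) / 2 < p" "p \<le> 1"
  shows "(\<lambda>m. aB_lower p m) \<longlonglongrightarrow> 1"
proof -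
  define t where "t m = 1 - aB_lower p m" for m
  define k where "k = 2 * t 0 - t 0 ^ 3"
  have t0: "0 \<le> t 0" "t 0 < (sqrt 5 - 1) / 2" using assms by (auto simp: t_def field_simps)
  note contraction = inverse_golden_contraction[OF _ _ t0(2)]
  have k: "0 \<le> k" "k < 1" using contraction[OF t0(1) order.refl] by (auto simp: k_def)
  have t_Suc: "t (Suc m) = t m * (2 * t m - t m ^ 3)" for m
    by (simp add: t_def power2_eq_square power3_eq_cube algebra_simps)
  have bound: "0 \<le> t m \<and> t m \<le> t 0 * k ^ m" for m
  proof (induction m)
    case (Suc m)
    then have IH: "0 \<le> t m" "t m \<le> t 0 * k ^ m" by auto
    moreover have "t 0 * k ^ m \<le> t 0" using t0(1) k by (intro mult_left_le power_le_one) auto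
    ultimately have "t m \<le> t 0" by linarith
    then have "0 \<le> 2 * t m - t m ^ 3" "2 * t m - t m ^ 3 \<le> k"
      using IH(1) contraction by (auto simp: k_def)
    then have "0 \<le> t (Suc m)" "t (Suc m) \<le> t 0 * k ^ m * k"
      using IH unfolding t_Suc by (simp_all add: mult_mono)
    then show ?case by (simp add: mult_ac)
  qed (simp add: t0)
  have geometric: "(\<lambda>m. t 0 * k ^ m) \<longlonglongrightarrow> 0"
    using k by (intro tendsto_mult_right_zero LIMSEQ_power_zero) auto
  have "t \<longlonglongrightarrow> 0"
    by (rule tendsto_sandwich[OF _ _ tendsto_const geometric]) (simp_all add: bound)
  then have "(\<lambda>m. 1 - t m) \<longlonglongrightarrow> 1 - 0" by (intro tendsto_diff tendsto_const)
  then show ?thesis by (simp add: t_def)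
qed

lemma one_minus_power_le_inverse:
  fixes x :: real
  assumes "0 < x" "x \<le> 1" "0 < N"
  shows "(1 - x) ^ N \<le> inverse (real N * x)"
proof -
  have "(1 - x) ^ N \<le> exp (- x) ^ N"
    using assms(2) exp_ge_add_one_self[of "- x"] by (intro power_mono) auto
  also have "\<dots> = inverse (exp (real N * x))"
    by (simp add: exp_minus exp_of_nat_mult[symmetric] power_inverse)
  also have "\<dots> \<le> inverse (real N * x)"
  proof (rule le_imp_inverse_le)
    show "real N * x \<le> exp (real N * x)" using exp_ge_add_one_self[of "real N * x"] by linarith
  qed (use assms in simp)
  finally show ?thesis .
qed

lemma P_Ab_tendsto_0:
  assumes "0 \<le> p" "p < 1/2"
  shows "(\<lambda>n. P_Ab n p) \<longlonglongrightarrow> 0"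
proof (rule tendsto_sandwich[OF _ _ tendsto_const])
  define q where "q = 2 * (1 - p)"
  have "P_Ab n p \<le> inverse (1 - p) * inverse (q ^ n)" for n
  proof -
    have "P_Ab n p \<le> (1 - (1 - p) ^ Suc n) ^ (2 ^ n)" using assms by (intro P_Ab_le_escape) auto
    also have "\<dots> \<le> inverse (real (2 ^ n) * (1 - p) ^ Suc n)"
      using assms by (intro one_minus_power_le_inverse zero_less_power power_le_one) auto
    also have "real (2 ^ n) * (1 - p) ^ Suc n = (1 - p) * q ^ n"
      unfolding q_def power_mult_distrib by simp
    finally show ?thesis by (simp add: inverse_mult_distrib)
  qed
  then show "\<forall>\<^sub>F n in sequentially. P_Ab n p \<le> inverse (1 - p) * inverse (q ^ n)" by simp
  show "(\<lambda>n. inverse (1 - p) * inverse (q ^ n)) \<longlonglongrightarrow> 0"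
    using assms by (intro tendsto_mult_right_zero LIMSEQ_inverse_realpow_zero) (auto simp: q_def)
  show "\<forall>\<^sub>F n in sequentially. 0 \<le> P_Ab n p"
    using assms by (simp add: P_Ab_eq_rand_prob rand_prob_nonneg)
qed

lemma P_Ab_tendsto_1:
  assumes "7/8 \<le> p" "p \<le> 1"
  shows "(\<lambda>n. P_Ab n p) \<longlonglongrightarrow> 1"
proof (rule tendsto_sandwich[OF _ _ _ tendsto_const])
  have "(\<lambda>n. 1 - fst (chooser_bound (1 - p) n)) \<longlonglongrightarrow> 1 - 0"
    using assms by (intro tendsto_diff tendsto_const chooser_bound_tendsto_0) auto
  then show "(\<lambda>n. 1 - fst (chooser_bound (1 - p) n)) \<longlonglongrightarrow> 1" by simp
  show "\<forall>\<^sub>F n in sequentially. 1 - fst (chooser_bound (1 - p) n) \<le> P_Ab n p"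
    using P_Ab_ge_chooser_bound[OF assms] by simp
  show "\<forall>\<^sub>F n in sequentially. P_Ab n p \<le> 1"
    using assms by (simp add: P_Ab_eq_rand_prob rand_prob_le_1 finite_outcomes_Ab)
qed

lemma P_aB_tendsto_0:
  assumes "0 \<le> p" "p \<le> 1/16"
  shows "(\<lambda>n. P_aB n p) \<longlonglongrightarrow> 0"
proof -
  have e: "0 \<le> 1 - (1 - p)^2" "1 - (1 - p)^2 \<le> 1/8" using aB_leaf_prob_range[OF assms] by auto
  have "(\<lambda>n. P_aB (Suc n) p) \<longlonglongrightarrow> 0"
  proof (rule tendsto_sandwich[OF _ _ tendsto_const chooser_bound_tendsto_0[OF e]])
    show "\<forall>\<^sub>F n in sequentially. 0 \<le> P_aB (Suc n) p"
      using assms by (simp add: P_aB_eq_rand_prob rand_prob_nonneg)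
    show "\<forall>\<^sub>F n in sequentially. P_aB (Suc n) p \<le> fst (chooser_bound (1 - (1 - p)^2) n)"
      using P_aB_Suc_le_chooser_bound[OF assms] by simp
  qed
  then show ?thesis by (rule LIMSEQ_imp_Suc)
qed

lemma P_aB_tendsto_1:
  assumes "(3 - sqrt 5) / 2 < p" "p \<le> 1"
  shows "(\<lambda>n. P_aB n p) \<longlonglongrightarrow> 1"
proof (rule tendsto_sandwich[OF _ _ aB_lower_tendsto_1[OF assms] tendsto_const])
  have "0 \<le> p" using assms(1) real_sqrt_le_iff[of 5 9] by simp
  then show "\<forall>\<^sub>F n in sequentially. aB_lower p n \<le> P_aB n p"
    "\<forall>\<^sub>F n in sequentially. P_aB n p \<le> 1"
    using assms(2) by (simp_all add: aB_lower_le_P_aB)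
      (simp add: P_aB_eq_rand_prob rand_prob_le_1 finite_outcomes_aB)
qed

lemma pc_Ab_ge: "1/2 \<le> pc_Ab"
  unfolding pc_Ab_def
proof (rule dense_le_bounded[of 0])
  fix w :: real assume "0 < w" "w < 1/2"
  then show "w \<le> Sup {p \<in> {0..1}. (\<lambda>n. P_Ab n p) \<longlonglongrightarrow> 0}"
    by (intro cSup_upper) (auto intro: P_Ab_tendsto_0 bdd_aboveI[of _ 1])
qed simp

lemma pc_Ab_le: "pc_Ab \<le> 7/8"
  unfolding pc_Ab_def
proof (rule cSup_least)
  have "0 \<in> {p \<in> {0..1}. (\<lambda>n. P_Ab n p) \<longlonglongrightarrow> 0}" using P_Ab_tendsto_0[of 0] by simp
  then show "{p \<in> {0..1}. (\<lambda>n. P_Ab n p) \<longlonglongrightarrow> 0} \<noteq> {}" by blast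
  show "p \<le> 7/8" if "p \<in> {p \<in> {0..1}. (\<lambda>n. P_Ab n p) \<longlonglongrightarrow> 0}" for p
    using that P_Ab_tendsto_1[of p] LIMSEQ_unique[of "\<lambda>n. P_Ab n p" 0 1] by force
qed

lemma pc_aB_ge: "1/16 \<le> pc_aB"
  unfolding pc_aB_def
proof (rule cInf_greatest)
  have "(3 - sqrt 5) / 2 < 1" using real_sqrt_less_iff[of 1 5] by simp
  then show "{p \<in> {0..1}. (\<lambda>n. P_aB n p) \<longlonglongrightarrow> 1} \<noteq> {}" using P_aB_tendsto_1[of 1] by auto
  show "1/16 \<le> p" if "p \<in> {p \<in> {0..1}. (\<lambda>n. P_aB n p) \<longlonglongrightarrow> 1}" for p
    using that P_aB_tendsto_0[of p] LIMSEQ_unique[of "\<lambda>n. P_aB n p" 0 1] by force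
qed

lemma pc_aB_le: "pc_aB \<le> (3 - sqrt 5) / 2"
  unfolding pc_aB_def
proof (rule dense_ge_bounded)
  show "(3 - sqrt 5) / 2 < 1" using real_sqrt_less_iff[of 1 5] by simp
  fix w :: real assume "(3 - sqrt 5) / 2 < w" "w < 1"
  moreover have "0 \<le> (3 - sqrt 5) / 2" using real_sqrt_le_iff[of 5 9] by simp
  ultimately show "Inf {p \<in> {0..1}. (\<lambda>n. P_aB n p) \<longlonglongrightarrow> 1} \<le> w"
    by (intro cInf_lower) (auto intro: P_aB_tendsto_1 bdd_belowI[of _ 0])
qed

theorem proposition3:
  shows "1/2 \<le> pc_Ab \<and> pc_Ab \<le> 7/8 \<and> 1/16 \<le> pc_aB \<and> pc_aB \<le> (3 - sqrt 5) / 2"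
  using pc_Ab_ge pc_Ab_le pc_aB_ge pc_aB_le by blast

end
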